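(* Consider the model $Y_i=f(x_i)+V^{1/2}(x_i)\xi_i$, $i=0,\dots,n$, with $x_i=i/n$, where $\xi_0,\dots,\xi_n$ are i.i.d. with $E\xi_i=0$, $E\xi_i^2=1$, $E\xi_i^4<\infty$. Suppose $f\in\mathcal{H}_\alpha(M)$ and $V\in\mathcal{H}_\beta(M)$ with $V\ge 0$, where $\alpha>0$ and $0<\beta<\frac12$. Let $0<h<1$ and let $K$ be a kernel as described in the context. Assume that $$\left|1-\int_{-2/n}^{2/n}\frac1hK\!\left(\frac uh\right)du\right|\ge c$$ for some universal constant $c>0$. Define $R_i=Y_{i+1}-Y_i$ for $i=0,\dots,n-1$, for $t\in\mathbb{Z}$ $$K_n^h(t)=\frac{\int_{|t|/n}^{(|t|+1)/n}\frac1hK(\frac uh)\,du}{1-\int_{-2/n}^{2/n}\frac1hK(\frac uh)\,du}\,\mathbb{1}_{\{|t|\ge2\}},$$ and the statistic $$\hat T=\frac1n\sum_{\substack{0\le i,j\le n-1\\|i-j|\ge2}}K_n^h(i-j)R_i^2R_j^2-\frac1{n^2}\sum_{\substack{0\le i,j\le n-1\\|i-j|\ge2}}R_i^2R_j^2 .$$ With $W_i=V(\frac in)+V(\frac{i+1}n)$, $\delta_i=f(\frac{i+1}n)-f(\frac in)$ ($0\le i\le n-1$), $\bar W_n=\frac1n\sum_{i=0}^{n-1}W_i$, $\overline{\delta^2_n}=\frac1n\sum_{i=0}^{n-1}\delta_i^2$, $T=\frac1n\sum_{i=0}^{n-1}(W_i+\delta_i^2-\bar W_n-\overline{\delta^2_n})^2$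 and $W=(W_0,\dots,W_{n-1})\in\mathbb{R}^n$, we have $$E_{f,V}\big(|\hat T-T|^2\big)\lesssim n^{-8(\alpha\wedge1)}+h^{4\beta}+h^2+\frac1{n^2h}+\frac{\|W-\bar W_n\mathbf 1_n\|_2^2}{n^2},$$ where $\mathbf 1_n\in\mathbb{R}^n$ is the all-ones vector and the implicit constant does not depend on $n,h,f,V$.
   Context: $\mathcal{H}_\alpha(M)$: functions $g:[0,1]\to\mathbb{R}$ with $|g^{(\lfloor\alpha\rfloor)}(x)-g^{(\lfloor\alpha\rfloor)}(y)|\le M|x-y|^{\alpha-\lfloor\alpha\rfloor}$ for all $x,y\in[0,1]$ and $\|g^{(k)}\|_\infty\le M$ for $k=0,\dots,\lfloor\alpha\rfloor$; $M$ is a fixed sufficiently large constant. The kernel $K:\mathbb{R}\to\mathbb{R}$ is supported on $[-1,1]$, symmetric about $0$, bounded above and below by a universal constant, and satisfies $\int_{-1}^1K(x)\,dx=1$. $E_{f,V}$ denotes expectation under the model with mean $f$ and variance $V$. $a\lesssim b$ means $a\le Cb$ with $C$ not depending on $n,h,f,V$ (it may depend on $\alpha,\beta,M,K,c$ and the noise distribution). $\|\cdot\|_2$ on $\mathbb{R}^n$ is the Euclidean norm. *)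

theory Defs
  imports "HOL-Probability.Probability"
begin

definition holder_class :: "real \<Rightarrow> real \<Rightarrow> (real \<Rightarrow> real) set" where
  "holder_class \<alpha> M = {g. \<exists>D :: nat \<Rightarrow> real \<Rightarrow> real.
      (\<forall>x\<in>{0..1}. D 0 x = g x) \<and>
      (\<forall>k < nat \<lfloor>\<alpha>\<rfloor>. \<forall>x\<in>{0..1}.
          (D k has_real_derivative D (Suc k) x) (at x within {0..1})) \<and>
      (\<forall>k \<le> nat \<lfloor>\<alpha>\<rfloor>. \<forall>x\<in>{0..1}. \<bar>D k x\<bar> \<le> M) \<and>
      (\<forall>x\<in>{0..1}. \<forall>y\<in>{0..1}.
          \<bar>D (nat \<lfloor>\<alpha>\<rfloor>) x - D (nat \<lfloor>\<alpha>\<rfloor>) y\<bar> \<le> M * \<bar>x - y\<bar> powr (\<alpha> - of_int \<lfloor>\<alpha>\<rfloor>))}"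

definition is_kernel :: "(real \<Rightarrow> real) \<Rightarrow> bool" where
  "is_kernel K \<longleftrightarrow> K \<in> borel_measurable borel \<and>
     (\<forall>x. \<bar>x\<bar> > 1 \<longrightarrow> K x = 0) \<and> (\<forall>x. K (- x) = K x) \<and>
     (\<exists>B. \<forall>x. \<bar>K x\<bar> \<le> B) \<and>
     K integrable_on {-1..1} \<and> integral {-1..1} K = 1"

definition kden :: "(real \<Rightarrow> real) \<Rightarrow> nat \<Rightarrow> real \<Rightarrow> real" where
  "kden K n h = 1 - integral {-2 / real n .. 2 / real n} (\<lambda>u. K (u / h) / h)"

definition Knh :: "(real \<Rightarrow> real) \<Rightarrow> nat \<Rightarrow> real \<Rightarrow> int \<Rightarrow> real" where
  "Knh K n h t = (if \<bar>t\<bar> \<ge> 2 then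
      integral {real_of_int \<bar>t\<bar> / real n .. (real_of_int \<bar>t\<bar> + 1) / real n} (\<lambda>u. K (u / h) / h)
        / kden K n h
    else 0)"

definition obsY :: "nat \<Rightarrow> (real \<Rightarrow> real) \<Rightarrow> (real \<Rightarrow> real) \<Rightarrow> (nat \<Rightarrow> 'a \<Rightarrow> real) \<Rightarrow> nat \<Rightarrow> 'a \<Rightarrow> real" where
  "obsY n f V \<xi> i \<omega> = f (real i / real n) + sqrt (V (real i / real n)) * \<xi> i \<omega>"

definition diffR :: "nat \<Rightarrow> (real \<Rightarrow> real) \<Rightarrow> (real \<Rightarrow> real) \<Rightarrow> (nat \<Rightarrow> 'a \<Rightarrow> real) \<Rightarrow> nat \<Rightarrow> 'a \<Rightarrow> real" where
  "diffR n f V \<xi> i \<omega> = obsY n f V \<xi> (Suc i) \<omega> - obsY n f V \<xi> i \<omega>"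

definition That :: "(real \<Rightarrow> real) \<Rightarrow> nat \<Rightarrow> real \<Rightarrow> (real \<Rightarrow> real) \<Rightarrow> (real \<Rightarrow> real) \<Rightarrow> (nat \<Rightarrow> 'a \<Rightarrow> real) \<Rightarrow> 'a \<Rightarrow> real" where
  "That K n h f V \<xi> \<omega> =
     (1 / real n) * (\<Sum>i<n. \<Sum>j<n. if \<bar>int i - int j\<bar> \<ge> 2 then
         Knh K n h (int i - int j) * (diffR n f V \<xi> i \<omega>)\<^sup>2 * (diffR n f V \<xi> j \<omega>)\<^sup>2 else 0)
   - (1 / (real n)\<^sup>2) * (\<Sum>i<n. \<Sum>j<n. if \<bar>int i - int j\<bar> \<ge> 2 then
         (diffR n f V \<xi> i \<omega>)\<^sup>2 * (diffR n f V \<xi> j \<omega>)\<^sup>2 else 0)"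

definition Wv :: "nat \<Rightarrow> (real \<Rightarrow> real) \<Rightarrow> nat \<Rightarrow> real" where
  "Wv n V i = V (real i / real n) + V (real (Suc i) / real n)"

definition deltav :: "nat \<Rightarrow> (real \<Rightarrow> real) \<Rightarrow> nat \<Rightarrow> real" where
  "deltav n f i = f (real (Suc i) / real n) - f (real i / real n)"

definition Wbar :: "nat \<Rightarrow> (real \<Rightarrow> real) \<Rightarrow> real" where
  "Wbar n V = (1 / real n) * (\<Sum>i<n. Wv n V i)"

definition delta2bar :: "nat \<Rightarrow> (real \<Rightarrow> real) \<Rightarrow> real" where
  "delta2bar n f = (1 / real n) * (\<Sum>i<n. (deltav n f i)\<^sup>2)"

definition Ttarget :: "nat \<Rightarrow> (real \<Rightarrow> real) \<Rightarrow> (real \<Rightarrow> real) \<Rightarrow> real" where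
  "Ttarget n f V = (1 / real n) *
     (\<Sum>i<n. (Wv n V i + (deltav n f i)\<^sup>2 - Wbar n V - delta2bar n f)\<^sup>2)"

definition Wdev2 :: "nat \<Rightarrow> (real \<Rightarrow> real) \<Rightarrow> real" where
  "Wdev2 n V = (\<Sum>i<n. (Wv n V i - Wbar n V)\<^sup>2)"

end

(* Write R_i^2 = m_i + Z_i with m_i = W_i + delta_i^2 its mean. The statistic is a quadratic form
   sum_ij g_ij R_i^2 R_j^2, so T_hat - T splits into a deterministic bias, a linear form
   sum_i c_i Z_i and a quadratic form sum_ij g_ij Z_i Z_j, each controlled in L^2.

   Z_i depends only on (xi_i, xi_(i+1)), so the Z_i are one-dependent: the linear form has second
   moment O(sum_i c_i^2), and the quadratic form, whose coefficients vanish near the diagonal, has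
   second moment O(max |g_ij| * sum |g_ij|) = O(1/(n^2 h)).

   The normalisation kden makes the weights sum to one away from the boundary, so the bias consists
   of a smoothing error that by symmetry of the weights is quadratic in the oscillation
   h^beta + n^(-2 min(alpha,1)) of m over a kernel window, a boundary error on O(n h) indices, and an
   O(1/n) correction from the excluded near-diagonal terms. The coefficients c_i of the linear form
   are the same smoothing, boundary and centring terms divided by n, which produces the term
   |W - W_bar 1_n|^2 / n^2. *)
theory Submission
  imports Defs
begin

lemma sq_sum3_le: "((x::real) + y + z)\<^sup>2 \<le> 3 * (x\<^sup>2 + y\<^sup>2 + z\<^sup>2)"
proof -
  have "0 \<le> (x - y)\<^sup>2 + (x - z)\<^sup>2 + (y - z)\<^sup>2" by simp
  then show ?thesis by (simp add: power2_eq_square algebra_simps)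
qed

lemma sq_sum4_le: "((w::real) + x + y + z)\<^sup>2 \<le> 4 * (w\<^sup>2 + x\<^sup>2 + y\<^sup>2 + z\<^sup>2)"
proof -
  have "0 \<le> (w - x)\<^sup>2 + (w - y)\<^sup>2 + (w - z)\<^sup>2 + (x - y)\<^sup>2 + (x - z)\<^sup>2 + (y - z)\<^sup>2" by simp
  then show ?thesis by (simp add: power2_eq_square algebra_simps)
qed

lemma mult_le_of_squares_le:
  fixes x y r :: real
  assumes "x\<^sup>2 \<le> r" "y\<^sup>2 \<le> r"
  shows "x * y \<le> r"
proof -
  have "0 \<le> (x - y)\<^sup>2" by simp
  then have "2 * (x * y) \<le> x\<^sup>2 + y\<^sup>2" by (simp add: power2_eq_square algebra_simps)
  then show ?thesis using assms by linarith
qed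

lemma card_near_index_le: "card {j. j < n \<and> \<bar>int i - int j\<bar> < 2} \<le> 3"
proof -
  have "{j. j < n \<and> \<bar>int i - int j\<bar> < 2} \<subseteq> {i - 1..i + 1}" by auto
  then have "card {j. j < n \<and> \<bar>int i - int j\<bar> < 2} \<le> card {i - 1..i + 1}" by (intro card_mono) auto
  also have "\<dots> \<le> 3" by simp
  finally show ?thesis .
qed

lemma sum_near_diag_le:
  fixes c :: "nat \<Rightarrow> real"
  shows "(\<Sum>i<n. \<Sum>k<n. if \<bar>int k - int i\<bar> < 2 then ((c i)\<^sup>2 + (c k)\<^sup>2) / 2 else 0)
    \<le> 3 * (\<Sum>i<n. (c i)\<^sup>2)"
proof -
  define near where "near i k \<longleftrightarrow> \<bar>int k - int i\<bar> < 2" for i k :: nat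
  have "(if near i k then ((c i)\<^sup>2 + (c k)\<^sup>2) / 2 else 0)
      = ((if near i k then (c i)\<^sup>2 else 0) + (if near i k then (c k)\<^sup>2 else 0)) / 2" for i k
    by simp
  then have "(\<Sum>i<n. \<Sum>k<n. if near i k then ((c i)\<^sup>2 + (c k)\<^sup>2) / 2 else 0)
      = ((\<Sum>i<n. \<Sum>k<n. if near i k then (c i)\<^sup>2 else 0) + (\<Sum>i<n. \<Sum>k<n. if near i k then (c k)\<^sup>2 else 0)) / 2"
    by (simp add: sum.distrib add_divide_distrib sum_divide_distrib)
  also have "(\<Sum>i<n. \<Sum>k<n. if near i k then (c k)\<^sup>2 else 0) = (\<Sum>i<n. \<Sum>k<n. if near i k then (c i)\<^sup>2 else 0)"
    by (subst sum.swap) (simp add: near_def abs_minus_commute)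
  also have "((\<Sum>i<n. \<Sum>k<n. if near i k then (c i)\<^sup>2 else 0) + (\<Sum>i<n. \<Sum>k<n. if near i k then (c i)\<^sup>2 else 0)) / 2
      = (\<Sum>i<n. \<Sum>k<n. if near i k then (c i)\<^sup>2 else 0)"
    by simp
  also have "\<dots> \<le> (\<Sum>i<n. 3 * (c i)\<^sup>2)"
  proof (rule sum_mono)
    fix i
    have "(\<Sum>k<n. if near i k then (c i)\<^sup>2 else 0) = real (card {k. k < n \<and> \<bar>int i - int k\<bar> < 2}) * (c i)\<^sup>2"
      by (simp add: sum.If_cases Int_def near_def abs_minus_commute)
    also have "\<dots> \<le> 3 * (c i)\<^sup>2" using card_near_index_le[of n i] by (intro mult_right_mono) auto
    finally show "(\<Sum>k<n. if near i k then (c i)\<^sup>2 else 0) \<le> 3 * (c i)\<^sup>2" .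
  qed
  finally show ?thesis unfolding near_def by (simp add: sum_distrib_left)
qed

lemma pow4_sum3_le: "((x::real) + y + z) ^ 4 \<le> 27 * (x ^ 4 + y ^ 4 + z ^ 4)"
proof -
  have "((x + y + z)\<^sup>2)\<^sup>2 \<le> (3 * (x\<^sup>2 + y\<^sup>2 + z\<^sup>2))\<^sup>2"
    by (rule power_mono[OF sq_sum3_le]) simp
  also have "\<dots> = 9 * (x\<^sup>2 + y\<^sup>2 + z\<^sup>2)\<^sup>2" unfolding power_mult_distrib by simp
  also have "\<dots> \<le> 9 * (3 * ((x\<^sup>2)\<^sup>2 + (y\<^sup>2)\<^sup>2 + (z\<^sup>2)\<^sup>2))"
    by (rule mult_left_mono[OF sq_sum3_le]) simp
  finally show ?thesis by (simp flip: power_mult)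
qed

section \<open>Hoelder classes on the grid\<close>

lemma holder_class_bounded:
  assumes "g \<in> holder_class \<alpha> M" "x \<in> {0..1}"
  shows "\<bar>g x\<bar> \<le> M"
proof -
  obtain D where "\<forall>x\<in>{0..1}. D 0 x = g x" "\<forall>k \<le> nat \<lfloor>\<alpha>\<rfloor>. \<forall>x\<in>{0..1}. \<bar>D k x\<bar> \<le> M"
    using assms(1) unfolding holder_class_def mem_Collect_eq by (elim exE conjE)
  then show ?thesis using assms(2) by force
qed

lemma holder_class_diff_le:
  assumes "g \<in> holder_class \<alpha> M" "\<alpha> > 0" "x \<in> {0..1}" "y \<in> {0..1}"
  shows "\<bar>g x - g y\<bar> \<le> M * \<bar>x - y\<bar> powr min \<alpha> 1"
proof -
  obtain D where D0: "\<forall>x\<in>{0..1}. D 0 x = g x"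
    and D_deriv: "\<forall>k < nat \<lfloor>\<alpha>\<rfloor>. \<forall>x\<in>{0..1}. (D k has_real_derivative D (Suc k) x) (at x within {0..1})"
    and D_bound: "\<forall>k \<le> nat \<lfloor>\<alpha>\<rfloor>. \<forall>x\<in>{0..1}. \<bar>D k x\<bar> \<le> M"
    and D_holder: "\<forall>x\<in>{0..1}. \<forall>y\<in>{0..1}.
      \<bar>D (nat \<lfloor>\<alpha>\<rfloor>) x - D (nat \<lfloor>\<alpha>\<rfloor>) y\<bar> \<le> M * \<bar>x - y\<bar> powr (\<alpha> - of_int \<lfloor>\<alpha>\<rfloor>)"
    using assms(1) unfolding holder_class_def mem_Collect_eq by (elim exE conjE)
  show ?thesis
  proof (cases "\<alpha> < 1")
    case True
    then have "\<lfloor>\<alpha>\<rfloor> = 0" using assms(2) by (simp add: floor_eq_iff)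
    then have "\<bar>D 0 x - D 0 y\<bar> \<le> M * \<bar>x - y\<bar> powr \<alpha>"
      using D_holder[rule_format, OF assms(3,4)] by simp
    then show ?thesis using True D0 assms(3,4) by simp
  next
    case False
    then have k: "0 < nat \<lfloor>\<alpha>\<rfloor>" "1 \<le> nat \<lfloor>\<alpha>\<rfloor>" by linarith+
    have deriv: "(D 0 has_field_derivative D 1 z) (at z within {0..1})" if "z \<in> {0..1}" for z
      using D_deriv[rule_format, OF k(1) that] by simp
    have bound: "norm (D 1 z) \<le> M" if "z \<in> {0..1}" for z
      using D_bound[rule_format, OF k(2) that] by simp
    have "norm (D 0 x - D 0 y) \<le> M * norm (x - y)"
      by (rule field_differentiable_bound[OF convex_real_interval(5) deriv bound assms(3,4)])
    then show ?thesis using False D0[rule_format, OF assms(3)] D0[rule_format, OF assms(4)] by simp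
  qed
qed

lemma grid_point_in_unit: "q \<le> n \<Longrightarrow> n \<ge> 1 \<Longrightarrow> real q / real n \<in> {0..1}"
  by auto

lemma nonneg_holder_grid_bounds:
  assumes "V \<in> holder_class \<beta> M" "\<forall>x\<in>{0..1}. 0 \<le> V x" "q \<le> n" "n \<ge> 1"
  shows "0 \<le> V (real q / real n)" and "V (real q / real n) \<le> M"
  using assms(2) holder_class_bounded[OF assms(1) grid_point_in_unit[OF assms(3,4)]]
    grid_point_in_unit[OF assms(3,4)] by auto

lemma Wv_holder:
  assumes "V \<in> holder_class \<beta> M" "0 < \<beta>" "\<beta> < 1" "i < n" "j < n"
  shows "\<bar>Wv n V i - Wv n V j\<bar> \<le> 2 * M * (\<bar>real i - real j\<bar> / real n) powr \<beta>"
proof -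
  have n: "n \<ge> 1" using assms(4) by simp
  have "\<bar>V (real p / real n) - V (real q / real n)\<bar> \<le> M * (\<bar>real i - real j\<bar> / real n) powr \<beta>"
    if "(p, q) = (i, j) \<or> (p, q) = (Suc i, Suc j)" for p q
  proof -
    have "\<bar>real p / real n - real q / real n\<bar> = \<bar>real i - real j\<bar> / real n"
      using that n by (auto simp: diff_divide_distrib[symmetric] abs_div)
    then show ?thesis
      using holder_class_diff_le[OF assms(1,2) grid_point_in_unit grid_point_in_unit, of p n q n] that
        assms(3-5) n by auto
  qed
  from this[of i j] this[of "Suc i" "Suc j"] show ?thesis unfolding Wv_def by (auto simp: abs_le_iff)
qed

lemma deltav_sq_le:
  assumes "f \<in> holder_class \<alpha> M" "\<alpha> > 0" "i < n"
  shows "(deltav n f i)\<^sup>2 \<le> M\<^sup>2 * real n powr (- 2 * min \<alpha> 1)"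
proof -
  have n: "n \<ge> 1" using assms(3) by simp
  have "\<bar>deltav n f i\<bar> \<le> M * \<bar>real (Suc i) / real n - real i / real n\<bar> powr min \<alpha> 1"
    unfolding deltav_def using assms(3) n
    by (intro holder_class_diff_le[OF assms(1,2)] grid_point_in_unit) auto
  also have "\<bar>real (Suc i) / real n - real i / real n\<bar> powr min \<alpha> 1 = real n powr (- min \<alpha> 1)"
    using n by (simp add: diff_divide_distrib[symmetric] powr_minus_divide powr_divide)
  finally have "(deltav n f i)\<^sup>2 \<le> (M * real n powr (- min \<alpha> 1))\<^sup>2"
    using power_mono[of "\<bar>deltav n f i\<bar>" _ 2] by simp
  also have "\<dots> = M\<^sup>2 * real n powr (- 2 * min \<alpha> 1)"
    using n by (simp add: power_mult_distrib powr_power)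
  finally show ?thesis .
qed

section \<open>Discretised kernel weights\<close>

lemma is_kernel_bounded:
  assumes "is_kernel K"
  obtains B where "\<And>x. \<bar>K x\<bar> \<le> B"
  using assms unfolding is_kernel_def by auto

lemma scaled_kernel_integrable:
  assumes "is_kernel K" "h > 0"
  shows "(\<lambda>u. K (u / h) / h) integrable_on {a..b}"
proof -
  obtain B where B: "\<And>x. \<bar>K x\<bar> \<le> B" using is_kernel_bounded[OF assms(1)] by metis
  have [measurable]: "K \<in> borel_measurable borel" using assms(1) unfolding is_kernel_def by simp
  have "(\<lambda>u. K (u / h) / h) \<in> borel_measurable borel" by measurable
  then have "(\<lambda>u. K (u / h) / h) \<in> borel_measurable (lebesgue_on {a..b})"
    by (metis measurable_lborel2 measurable_restrict_space1 measurable_completion)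
  then have "(\<lambda>u. K (u / h) / h) absolutely_integrable_on {a..b}"
    by (rule measurable_bounded_by_integrable_imp_absolutely_integrable[where g="\<lambda>_. B / h"])
      (use B assms(2) in \<open>auto simp: abs_div divide_right_mono\<close>)
  then show ?thesis by (simp add: absolutely_integrable_on_def)
qed

lemma scaled_kernel_integral_abs_le:
  assumes "is_kernel K" "h > 0" "a \<le> b" "\<And>x. \<bar>K x\<bar> \<le> B"
  shows "\<bar>integral {a..b} (\<lambda>u. K (u / h) / h)\<bar> \<le> B / h * (b - a)"
proof -
  have "norm (integral {a..b} (\<lambda>u. K (u / h) / h)) \<le> integral {a..b} (\<lambda>_. B / h)"
    by (rule integral_norm_bound_integral)
      (use scaled_kernel_integrable[OF assms(1,2)] assms(2,4) in \<open>auto simp: abs_div divide_right_mono\<close>)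
  then show ?thesis using assms(3) by (simp add: mult.commute)
qed

lemma scaled_kernel_integral_eq_0:
  assumes "is_kernel K" "h > 0" "h \<le> a"
  shows "integral {a..b} (\<lambda>u. K (u / h) / h) = 0"
proof -
  have "K (u / h) / h = 0" if "u \<in> {a..b} - {h}" for u
  proof -
    have "\<bar>u / h\<bar> > 1" using that assms(2,3) by (auto simp: abs_div)
    then show ?thesis using assms(1) unfolding is_kernel_def by auto
  qed
  then have "integral {a..b} (\<lambda>u. K (u / h) / h) = integral {a..b} (\<lambda>_. 0)"
    by (intro integral_spike[where S="{h}"]) auto
  then show ?thesis by simp
qed

definition kernel_mass :: "(real \<Rightarrow> real) \<Rightarrow> real \<Rightarrow> real \<Rightarrow> real" where
  "kernel_mass K h x = integral {0..x} (\<lambda>u. K (u / h) / h)"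

lemma kernel_mass_diff:
  assumes "is_kernel K" "h > 0" "0 \<le> a" "a \<le> b"
  shows "integral {a..b} (\<lambda>u. K (u / h) / h) = kernel_mass K h b - kernel_mass K h a"
  using Henstock_Kurzweil_Integration.integral_combine[of 0 a b "\<lambda>u. K (u / h) / h"] scaled_kernel_integrable[OF assms(1,2)] assms(3,4)
  unfolding kernel_mass_def by auto

lemma kernel_mass_half:
  assumes "is_kernel K" "h > 0" "h \<le> x"
  shows "kernel_mass K h x = 1/2"
proof -
  have sym: "\<And>x. K (- x) = K x" and one: "integral {-1..1} K = 1" and int: "K integrable_on {-1..1}"
    using assms(1) unfolding is_kernel_def by auto
  have "integral {-1..-0} (\<lambda>x. K (- x)) = integral {0..1} K"
    by (rule Henstock_Kurzweil_Integration.integral_reflect_real)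
  then have "integral {-1..0} K = integral {0..1} K" using sym by simp
  moreover have "integral {-1..0} K + integral {0..1} K = 1"
    using Henstock_Kurzweil_Integration.integral_combine[of "-1" 0 1 K] int one by simp
  ultimately have half: "integral {0..1} K = 1/2" by simp
  have img: "(\<lambda>x. x / (1/h)) ` {0..1} = {0..h}"
    using assms(2) by (auto simp: image_iff intro!: bexI[where x="_ / h"])
  have "integral ((\<lambda>x. x / (1/h)) ` {0..1}) (\<lambda>x. K ((1/h) * x)) = (1 / \<bar>1/h\<bar>) *\<^sub>R integral {0..1} K"
    by (rule integral_stretch_real) (use assms(2) in auto)
  then have "integral {0..h} (\<lambda>x. K (x / h)) = h * (1/2)"
    using img half assms(2) by simp
  then have "kernel_mass K h h = 1/2"
    unfolding kernel_mass_def using assms(2) by (simp add: integral_divide)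
  then show ?thesis
    using kernel_mass_diff[OF assms(1,2), of h x] scaled_kernel_integral_eq_0[OF assms(1,2), of h x] assms(2,3)
    by linarith
qed

lemma kden_eq_kernel_mass:
  assumes "is_kernel K" "h > 0"
  shows "kden K n h = 1 - 2 * kernel_mass K h (2 / real n)"
proof -
  let ?k = "\<lambda>u. K (u / h) / h" and ?r = "2 / real n"
  have "integral {-?r..-0} (\<lambda>x. ?k (- x)) = integral {0..?r} ?k"
    by (rule Henstock_Kurzweil_Integration.integral_reflect_real)
  then have "integral {-?r..0} ?k = integral {0..?r} ?k"
    using assms(1) unfolding is_kernel_def by (simp add: minus_divide_left[symmetric] del: minus_divide_left)
  moreover have "integral {-?r..0} ?k + integral {0..?r} ?k = integral {-?r..?r} ?k"
    using Henstock_Kurzweil_Integration.integral_combine[of "-?r" 0 ?r ?k] scaled_kernel_integrable[OF assms] by simp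
  ultimately have "integral {-?r..?r} ?k = 2 * integral {0..?r} ?k" by linarith
  then show ?thesis unfolding kden_def kernel_mass_def by simp
qed


lemma kden_bound_imp_bandwidth_gt:
  assumes "is_kernel K" "h > 0" "c > 0" "\<bar>kden K n h\<bar> \<ge> c"
  shows "h > 2 / real n"
proof (rule ccontr)
  assume "\<not> h > 2 / real n"
  then have "kernel_mass K h (2 / real n) = 1/2" by (intro kernel_mass_half[OF assms(1,2)]) simp
  then have "kden K n h = 0" using kden_eq_kernel_mass[OF assms(1,2)] by simp
  then show False using assms(3,4) by simp
qed

lemma Knh_eq_0_near: "\<bar>t\<bar> < 2 \<Longrightarrow> Knh K n h t = 0"
  unfolding Knh_def by auto

lemma Knh_minus: "Knh K n h (- t) = Knh K n h t"
  unfolding Knh_def by auto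

lemma Knh_eq_0_far:
  assumes "is_kernel K" "h > 0" "n \<ge> 1" "real_of_int \<bar>t\<bar> > real n * h"
  shows "Knh K n h t = 0"
proof -
  have "h \<le> real_of_int \<bar>t\<bar> / real n" using assms(3,4) by (simp add: field_simps)
  then show ?thesis unfolding Knh_def using scaled_kernel_integral_eq_0[OF assms(1,2)] by auto
qed

lemma Knh_abs_le:
  assumes "is_kernel K" "h > 0" "n \<ge> 1" "c > 0" "\<bar>kden K n h\<bar> \<ge> c" "\<And>x. \<bar>K x\<bar> \<le> B"
  shows "\<bar>Knh K n h t\<bar> \<le> B / (c * real n * h)"
proof (cases "2 \<le> \<bar>t\<bar>")
  case True
  let ?I = "integral {real_of_int \<bar>t\<bar> / real n .. (real_of_int \<bar>t\<bar> + 1) / real n} (\<lambda>u. K (u / h) / h)"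
  have "B \<ge> 0" using assms(6)[of 0] by auto
  have "\<bar>?I\<bar> \<le> B / h * ((real_of_int \<bar>t\<bar> + 1) / real n - real_of_int \<bar>t\<bar> / real n)"
    by (rule scaled_kernel_integral_abs_le[OF assms(1,2)]) (use assms(6) in \<open>auto simp: divide_right_mono\<close>)
  also have "\<dots> = B / (real n * h)" using assms(3) by (simp add: field_simps)
  finally have I: "\<bar>?I\<bar> \<le> B / (real n * h)" .
  have "\<bar>Knh K n h t\<bar> = \<bar>?I\<bar> / \<bar>kden K n h\<bar>"
    unfolding Knh_def if_P[OF True] by (rule abs_divide)
  also have "\<dots> \<le> (B / (real n * h)) / c"
    by (rule frac_le[OF _ I]) (use \<open>B \<ge> 0\<close> assms(2-5) in auto)
  finally show ?thesis by (simp add: field_simps)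
next
  case False
  then show ?thesis using assms(2-4) assms(6)[of 0] unfolding Knh_def by auto
qed

lemma Knh_half_sum:
  assumes "is_kernel K" "h > 0" "n \<ge> 1" "c > 0" "\<bar>kden K n h\<bar> \<ge> c"
  shows "(\<Sum>t=2..nat \<lfloor>real n * h\<rfloor>. Knh K n h (int t)) = 1/2"
proof -
  define N where "N = nat \<lfloor>real n * h\<rfloor>"
  have "real n * h > 2"
    using kden_bound_imp_bandwidth_gt[OF assms(1,2,4,5)] assms(3) by (simp add: field_simps)
  then have "N \<ge> 2" unfolding N_def by linarith
  have "Knh K n h (int t) = (kernel_mass K h (real (Suc t) / real n) - kernel_mass K h (real t / real n))
      / kden K n h" if "2 \<le> t" for t
    using that kernel_mass_diff[OF assms(1,2), of "real t / real n" "(real t + 1) / real n"]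
    unfolding Knh_def by (simp add: divide_right_mono add.commute)
  then have "(\<Sum>t=2..N. Knh K n h (int t))
      = (\<Sum>t=2..N. kernel_mass K h (real (Suc t) / real n) - kernel_mass K h (real t / real n)) / kden K n h"
    by (simp add: sum_divide_distrib)
  also have "\<dots> = (kernel_mass K h (real (Suc N) / real n) - kernel_mass K h (2 / real n)) / kden K n h"
    using sum_Suc_diff[of 2 N "\<lambda>t. kernel_mass K h (real t / real n)"] \<open>N \<ge> 2\<close> by simp
  also have "kernel_mass K h (real (Suc N) / real n) = 1/2"
    by (rule kernel_mass_half[OF assms(1,2)]) (use assms(3) in \<open>simp add: N_def field_simps, linarith\<close>)
  also have "1/2 - kernel_mass K h (2 / real n) = kden K n h / 2"
    using kden_eq_kernel_mass[OF assms(1,2)] by simp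
  finally show ?thesis unfolding N_def using assms(4,5) by auto
qed

lemma sum_diff_index_split:
  fixes F :: "int \<Rightarrow> real"
  assumes "i < n"
  shows "(\<Sum>j<n. F (int i - int j)) = (\<Sum>t=1..i. F (int t)) + F 0 + (\<Sum>t=1..<n-i. F (- int t))"
proof -
  have U: "{..<n} = {..<i} \<union> {i} \<union> {i<..<n}" using assms by auto
  have "(\<Sum>j<n. F (int i - int j))
      = (\<Sum>j<i. F (int i - int j)) + F 0 + (\<Sum>j\<in>{i<..<n}. F (int i - int j))"
    unfolding U by (subst sum.union_disjoint, auto)+
  also have "(\<Sum>j<i. F (int i - int j)) = (\<Sum>t=1..i. F (int t))"
    by (rule sum.reindex_bij_witness[of _ "\<lambda>t. i - t" "\<lambda>j. i - j"]) auto
  also have "(\<Sum>j\<in>{i<..<n}. F (int i - int j)) = (\<Sum>t=1..<n-i. F (- int t))"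
    by (rule sum.reindex_bij_witness[of _ "\<lambda>t. i + t" "\<lambda>j. j - i"]) auto
  finally show ?thesis .
qed

lemma Knh_row_sum:
  assumes "is_kernel K" "h > 0" "n \<ge> 1" "c > 0" "\<bar>kden K n h\<bar> \<ge> c"
    and "nat \<lfloor>real n * h\<rfloor> \<le> i" "i + nat \<lfloor>real n * h\<rfloor> < n"
  shows "(\<Sum>j<n. Knh K n h (int i - int j)) = 1"
proof -
  define N where "N = nat \<lfloor>real n * h\<rfloor>"
  have far: "Knh K n h (int t) = 0" "Knh K n h (- int t) = 0" if "t > N" for t
    using Knh_eq_0_far[OF assms(1-3), of "int t"] Knh_minus[of K n h "int t"] that
    unfolding N_def by linarith+
  have "(\<Sum>t=1..i. Knh K n h (int t)) = (\<Sum>t=1..N. Knh K n h (int t))"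
    by (rule sum.mono_neutral_right) (use assms(6) far in \<open>auto simp: N_def\<close>)
  moreover have "(\<Sum>t=1..<n-i. Knh K n h (- int t)) = (\<Sum>t=1..N. Knh K n h (int t))"
    by (subst Knh_minus[symmetric], rule sum.mono_neutral_right) (use assms(7) far in \<open>auto simp: N_def\<close>)
  moreover have "(\<Sum>t=1..N. Knh K n h (int t)) = (\<Sum>t=2..N. Knh K n h (int t))"
    by (rule sum.mono_neutral_right) (auto simp: Knh_eq_0_near)
  ultimately show ?thesis
    using sum_diff_index_split[of i n "Knh K n h"] assms(7) Knh_half_sum[OF assms(1-5)] Knh_eq_0_near[of 0]
    unfolding N_def by simp
qed

section \<open>Bias of the statistic\<close>

definition bias_const :: "real \<Rightarrow> real \<Rightarrow> real" where
  "bias_const M \<kappa> = 3 * (9/4 * \<kappa>\<^sup>2 * (128 * M ^ 4 + 8 * M ^ 8)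
     + 4 * (2 * M + M\<^sup>2) ^ 4 * (3 * \<kappa> + 1)\<^sup>2 + 9 * (2 * M + M\<^sup>2) ^ 4)"

definition lin_const :: "real \<Rightarrow> real \<Rightarrow> real" where
  "lin_const M \<kappa> = 16 * (9 * \<kappa>\<^sup>2 * (8 * M\<^sup>2 + 2 * M ^ 4)
     + 2 * (2 * M + M\<^sup>2)\<^sup>2 * (3 * \<kappa> + 1)\<^sup>2 + 2 + 2 * M ^ 4 + 9 * (2 * M + M\<^sup>2)\<^sup>2)"

text \<open>Kt, W i and d i stand for the weights Knh K n h, for W_i and for delta_i^2, so that
  m i is the mean of R_i^2. The statistic is the quadratic form with coefficients quad_coef in the R_i^2;
  osc bounds m over a kernel window, and rate is the right-hand side of the theorem.\<close>
locale kernel_design =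
  fixes n :: nat and h M \<beta> a \<kappa> :: real and N :: nat
    and Kt :: "int \<Rightarrow> real" and W d :: "nat \<Rightarrow> real"
  assumes n_ge_1: "n \<ge> 1" and h_pos: "0 < h" and h_less_1: "h < 1" and nh_ge_1: "1 \<le> real n * h"
    and \<beta>_pos: "0 < \<beta>" and a_pos: "0 < a" and \<kappa>_nonneg: "0 \<le> \<kappa>"
    and N_le: "real N \<le> real n * h"
    and Kt_minus: "\<And>t. Kt (- t) = Kt t"
    and Kt_near: "\<And>t. \<bar>t\<bar> < 2 \<Longrightarrow> Kt t = 0"
    and Kt_far: "\<And>t. \<bar>t\<bar> > int N \<Longrightarrow> Kt t = 0"
    and Kt_abs_le: "\<And>t. \<bar>Kt t\<bar> \<le> \<kappa> / (real n * h)"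
    and Kt_row_sum: "\<And>i. N \<le> i \<Longrightarrow> i + N < n \<Longrightarrow> (\<Sum>j<n. Kt (int i - int j)) = 1"
    and W_nonneg: "\<And>i. 0 \<le> W i" and W_le: "\<And>i. W i \<le> 2 * M"
    and W_holder: "\<And>i j. i < n \<Longrightarrow> j < n \<Longrightarrow>
      \<bar>W i - W j\<bar> \<le> 2 * M * (\<bar>real i - real j\<bar> / real n) powr \<beta>"
    and d_nonneg: "\<And>i. 0 \<le> d i" and d_le: "\<And>i. d i \<le> M\<^sup>2 * real n powr (- 2 * a)"
begin

definition "m i = W i + d i"
definition "mbar = (\<Sum>i<n. m i) / real n"
definition "Wb = (\<Sum>i<n. W i) / real n"
definition "Wdev = (\<Sum>i<n. (W i - Wb)\<^sup>2)"
definition "target = (\<Sum>i<n. (m i - mbar)\<^sup>2) / real n"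

definition "quad_coef i j = (if 2 \<le> \<bar>int i - int j\<bar> then Kt (int i - int j) / real n - 1 / (real n)\<^sup>2 else 0)"
definition "lin_coef i = (\<Sum>j<n. 2 * quad_coef i j * m j)"
definition "bias_term = (\<Sum>i<n. \<Sum>j<n. quad_coef i j * m i * m j)"

definition "smooth_err i = (\<Sum>j<n. Kt (int i - int j) * (m j - m i))"
definition "edge_err i = m i * ((\<Sum>j<n. Kt (int i - int j)) - 1)"
definition "diag_term i = (\<Sum>j<n. if \<bar>int i - int j\<bar> < 2 then m j else 0) / real n"

definition "osc = 2 * M * h powr \<beta> + M\<^sup>2 * real n powr (- 2 * a)"
definition "rate = real n powr (- 8 * a) + h powr (4 * \<beta>) + h\<^sup>2 + 1 / ((real n)\<^sup>2 * h) + Wdev / (real n)\<^sup>2"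

lemma n_gt_0: "real n > 0"
  using n_ge_1 by simp

lemma M_nonneg: "0 \<le> M"
  using W_nonneg[of 0] W_le[of 0] by linarith

lemma n_powr_le_1: "real n powr (- c) \<le> 1" if "0 \<le> c" for c
proof -
  have "real n powr (- c) \<le> real n powr 0" by (rule powr_mono) (use n_ge_1 that in auto)
  then show ?thesis using n_gt_0 by simp
qed

lemma d_le_M2: "d i \<le> M\<^sup>2"
  using d_le[of i] n_powr_le_1[of "2 * a"] a_pos mult_left_le[of _ "M\<^sup>2"] by (smt (verit) zero_le_power2)

lemma m_nonneg: "0 \<le> m i"
  unfolding m_def using W_nonneg[of i] d_nonneg[of i] by simp

lemma m_le: "m i \<le> 2 * M + M\<^sup>2"
  unfolding m_def using W_le[of i] d_le_M2[of i] by simp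

lemma quad_coef_eq_0_near: "\<bar>int i - int j\<bar> < 2 \<Longrightarrow> quad_coef i j = 0"
  unfolding quad_coef_def by simp

lemma quad_coef_sym: "quad_coef i j = quad_coef j i"
  unfolding quad_coef_def using Kt_minus[of "int i - int j"] by (auto simp: abs_minus_commute)

lemma Kt_row_abs_sum_le: "(\<Sum>j<n. \<bar>Kt (int i - int j)\<bar>) \<le> 3 * \<kappa>"
proof -
  define J where "J = {j. j < n \<and> \<bar>int i - int j\<bar> \<le> int N}"
  have "card J \<le> card {i - N..i + N}" unfolding J_def by (intro card_mono) auto
  then have card_J: "real (card J) \<le> 2 * (real n * h) + 1" using N_le by simp
  have "(\<Sum>j<n. \<bar>Kt (int i - int j)\<bar>) = (\<Sum>j\<in>J. \<bar>Kt (int i - int j)\<bar>)"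
    by (rule sum.mono_neutral_right) (use Kt_far in \<open>force simp: J_def\<close>)+
  also have "\<dots> \<le> real (card J) * (\<kappa> / (real n * h))"
    using sum_mono[of J "\<lambda>j. \<bar>Kt (int i - int j)\<bar>" "\<lambda>_. \<kappa> / (real n * h)"] Kt_abs_le by simp
  also have "\<dots> \<le> (2 * (real n * h) + 1) * (\<kappa> / (real n * h))"
    by (rule mult_right_mono[OF card_J]) (use \<kappa>_nonneg h_pos n_gt_0 in simp)
  also have "\<dots> = 2 * \<kappa> + \<kappa> / (real n * h)" using h_pos n_gt_0 by (simp add: field_simps)
  also have "\<kappa> / (real n * h) \<le> \<kappa>"
    using divide_left_mono[OF nh_ge_1 \<kappa>_nonneg] n_gt_0 h_pos by simp
  finally show ?thesis by simp
qed

lemma m_diff_le_osc: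
  assumes "i < n" "j < n" "Kt (int i - int j) \<noteq> 0"
  shows "\<bar>m j - m i\<bar> \<le> osc"
proof -
  have "\<bar>int i - int j\<bar> \<le> int N" using Kt_far assms(3) by force
  then have "\<bar>real j - real i\<bar> / real n \<le> h" using N_le n_gt_0 by (simp add: field_simps)
  then have "\<bar>W j - W i\<bar> \<le> 2 * M * h powr \<beta>"
    using W_holder[OF assms(2,1)] powr_mono2[of \<beta> "\<bar>real j - real i\<bar> / real n" h] \<beta>_pos M_nonneg
    by (smt (verit) mult_left_mono divide_nonneg_nonneg abs_ge_zero of_nat_0_le_iff)
  moreover have "\<bar>d j - d i\<bar> \<le> M\<^sup>2 * real n powr (- 2 * a)"
    using d_nonneg[of i] d_le[of i] d_nonneg[of j] d_le[of j] by linarith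
  ultimately show ?thesis unfolding m_def osc_def by linarith
qed

lemma osc_nonneg: "0 \<le> osc"
  unfolding osc_def using M_nonneg by simp

lemma abs_smooth_err_le: "\<bar>smooth_err i\<bar> \<le> 3 * \<kappa> * osc" if "i < n"
proof -
  have "\<bar>Kt (int i - int j) * (m j - m i)\<bar> \<le> \<bar>Kt (int i - int j)\<bar> * osc" if "j < n" for j
    using m_diff_le_osc[OF \<open>i < n\<close> that] by (cases "Kt (int i - int j) = 0") (auto simp: abs_mult mult_left_mono)
  then have "\<bar>smooth_err i\<bar> \<le> (\<Sum>j<n. \<bar>Kt (int i - int j)\<bar>) * osc"
    unfolding smooth_err_def sum_distrib_right
    by (intro order_trans[OF sum_abs] sum_mono) auto
  also have "\<dots> \<le> 3 * \<kappa> * osc" by (rule mult_right_mono[OF Kt_row_abs_sum_le osc_nonneg])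
  finally show ?thesis .
qed

lemma abs_edge_err_le: "\<bar>edge_err i\<bar> \<le> (2 * M + M\<^sup>2) * (3 * \<kappa> + 1)"
proof -
  have "\<bar>(\<Sum>j<n. Kt (int i - int j)) - 1\<bar> \<le> 3 * \<kappa> + 1"
    using sum_abs[of "\<lambda>j. Kt (int i - int j)" "{..<n}"] Kt_row_abs_sum_le[of i] by linarith
  then show ?thesis
    unfolding edge_err_def abs_mult using m_nonneg[of i] m_le[of i] by (intro mult_mono) auto
qed

lemma edge_err_interior: "N \<le> i \<Longrightarrow> i + N < n \<Longrightarrow> edge_err i = 0"
  unfolding edge_err_def using Kt_row_sum by simp

lemma diag_term_bounds: "0 \<le> diag_term i" "diag_term i \<le> 3 * (2 * M + M\<^sup>2) / real n"
proof -
  let ?J = "{j. j < n \<and> \<bar>int i - int j\<bar> < 2}"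
  have eq: "(\<Sum>j<n. if \<bar>int i - int j\<bar> < 2 then m j else 0) = (\<Sum>j\<in>?J. m j)"
    by (rule sum.mono_neutral_cong_right) auto
  have "(\<Sum>j\<in>?J. m j) \<le> real (card ?J) * (2 * M + M\<^sup>2)"
    using sum_mono[of ?J m "\<lambda>_. 2 * M + M\<^sup>2"] m_le by simp
  also have "\<dots> \<le> 3 * (2 * M + M\<^sup>2)"
    using card_near_index_le[of n i] M_nonneg by (intro mult_right_mono) auto
  finally show "diag_term i \<le> 3 * (2 * M + M\<^sup>2) / real n"
    unfolding diag_term_def eq using n_gt_0 by (simp add: divide_right_mono)
  show "0 \<le> diag_term i" unfolding diag_term_def eq by (simp add: sum_nonneg m_nonneg)
qed

lemma sum_boundary_le:
  assumes "\<And>i. N \<le> i \<Longrightarrow> i + N < n \<Longrightarrow> F i = 0" "\<And>i. 0 \<le> F i" "\<And>i. F i \<le> C"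
  shows "(\<Sum>i<n. F i) \<le> 2 * real n * h * C"
proof -
  define B where "B = {..<N} \<union> {n - N..<n}"
  have "C \<ge> 0" using assms(2,3)[of 0] by linarith
  have "real (card B) \<le> 2 * real n * h"
    using card_Un_le[of "{..<N}" "{n - N..<n}"] N_le unfolding B_def by simp
  have "F i = 0" if "i < n" "i \<notin> B" for i
  proof (rule assms(1))
    show "N \<le> i" "i + N < n" using that unfolding B_def by auto
  qed
  then have "(\<Sum>i<n. F i) = (\<Sum>i\<in>B \<inter> {..<n}. F i)"
    by (intro sum.mono_neutral_right) auto
  also have "\<dots> \<le> (\<Sum>i\<in>B. F i)"
    by (rule sum_mono2) (use assms(2) in \<open>auto simp: B_def\<close>)
  also have "\<dots> \<le> real (card B) * C" using sum_mono[of B F "\<lambda>_. C"] assms(3) by simp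
  also have "\<dots> \<le> 2 * real n * h * C"
    by (rule mult_right_mono) fact+
  finally show ?thesis .
qed

lemma quad_coef_row:
  "(\<Sum>j<n. quad_coef i j * m j) = (smooth_err i + edge_err i + (m i - mbar) + diag_term i) / real n"
proof -
  have "quad_coef i j * m j = Kt (int i - int j) * m j / real n - m j / (real n)\<^sup>2
      + (if \<bar>int i - int j\<bar> < 2 then m j else 0) / (real n)\<^sup>2" for j
    unfolding quad_coef_def using Kt_near by (auto simp: field_simps)
  then have "(\<Sum>j<n. quad_coef i j * m j) = (\<Sum>j<n. Kt (int i - int j) * m j) / real n
      - (\<Sum>j<n. m j) / (real n)\<^sup>2 + (\<Sum>j<n. if \<bar>int i - int j\<bar> < 2 then m j else 0) / (real n)\<^sup>2"
    by (simp add: sum.distrib sum_subtractf sum_divide_distrib)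
  moreover have "(\<Sum>j<n. Kt (int i - int j) * m j) = smooth_err i + edge_err i + m i"
    unfolding smooth_err_def edge_err_def
    by (simp add: algebra_simps sum_subtractf sum_distrib_left sum_distrib_right)
  ultimately show ?thesis
    unfolding mbar_def diag_term_def using n_gt_0 by (simp add: field_simps power2_eq_square)
qed

lemma target_eq: "target = (\<Sum>i<n. (m i)\<^sup>2) / real n - mbar\<^sup>2"
proof -
  have "(\<Sum>i<n. m i) = real n * mbar" unfolding mbar_def using n_gt_0 by simp
  moreover have "(\<Sum>i<n. (m i - mbar)\<^sup>2) = (\<Sum>i<n. (m i)\<^sup>2) - 2 * mbar * (\<Sum>i<n. m i) + real n * mbar\<^sup>2"
    by (simp add: power2_diff sum.distrib sum_subtractf sum_distrib_left algebra_simps)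
  ultimately show ?thesis unfolding target_def using n_gt_0 by (simp add: field_simps power2_eq_square)
qed

lemma bias_term_minus_target:
  "bias_term - target = ((\<Sum>i<n. m i * smooth_err i) + (\<Sum>i<n. m i * edge_err i) + (\<Sum>i<n. m i * diag_term i)) / real n"
proof -
  have "bias_term = (\<Sum>i<n. m i * (\<Sum>j<n. quad_coef i j * m j))"
    unfolding bias_term_def by (simp add: sum_distrib_left algebra_simps)
  also have "\<dots> = ((\<Sum>i<n. m i * smooth_err i) + (\<Sum>i<n. m i * edge_err i) + (\<Sum>i<n. (m i)\<^sup>2)
      - mbar * (\<Sum>i<n. m i) + (\<Sum>i<n. m i * diag_term i)) / real n"
    unfolding quad_coef_row
    by (simp add: sum_divide_distrib[symmetric] sum_distrib_left sum.distrib sum_subtractf algebra_simps power2_eq_square)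
  finally show ?thesis
    unfolding target_eq mbar_def using n_gt_0 by (simp add: field_simps power2_eq_square)
qed

text \<open>By the symmetry of the weights the smoothing error enters the bias only quadratically.\<close>
lemma sum_m_smooth_err:
  "(\<Sum>i<n. m i * smooth_err i) = - (\<Sum>i<n. \<Sum>j<n. Kt (int i - int j) * (m j - m i)\<^sup>2) / 2"
proof -
  define A where "A = (\<Sum>i<n. \<Sum>j<n. Kt (int i - int j) * (m i * (m j - m i)))"
  have "A = (\<Sum>j<n. \<Sum>i<n. Kt (int i - int j) * (m i * (m j - m i)))"
    unfolding A_def by (rule sum.swap)
  also have "\<dots> = (\<Sum>i<n. \<Sum>j<n. Kt (int i - int j) * (m j * (m i - m j)))"
    using Kt_minus by (intro sum.cong refl) (metis minus_diff_eq)
  finally have "2 * A = (\<Sum>i<n. \<Sum>j<n. Kt (int i - int j) * (m i * (m j - m i)) + Kt (int i - int j) * (m j * (m i - m j)))"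
    unfolding A_def by (simp add: sum.distrib)
  also have "\<dots> = (\<Sum>i<n. \<Sum>j<n. - (Kt (int i - int j) * (m j - m i)\<^sup>2))"
    by (intro sum.cong refl) (simp add: algebra_simps power2_eq_square)
  also have "\<dots> = - (\<Sum>i<n. \<Sum>j<n. Kt (int i - int j) * (m j - m i)\<^sup>2)"
    by (simp add: sum_negf)
  finally have "2 * A = - (\<Sum>i<n. \<Sum>j<n. Kt (int i - int j) * (m j - m i)\<^sup>2)" .
  moreover have "(\<Sum>i<n. m i * smooth_err i) = A"
    unfolding A_def smooth_err_def sum_distrib_left by (intro sum.cong refl) (rule mult.left_commute)
  ultimately show ?thesis by linarith
qed

lemma abs_sum_m_smooth_err_le: "\<bar>\<Sum>i<n. m i * smooth_err i\<bar> \<le> 3/2 * real n * \<kappa> * osc\<^sup>2"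
proof -
  have "\<bar>\<Sum>j<n. Kt (int i - int j) * (m j - m i)\<^sup>2\<bar> \<le> 3 * \<kappa> * osc\<^sup>2" if "i < n" for i
  proof -
    have "\<bar>Kt (int i - int j) * (m j - m i)\<^sup>2\<bar> \<le> \<bar>Kt (int i - int j)\<bar> * osc\<^sup>2" if "j < n" for j
    proof (cases "Kt (int i - int j) = 0")
      case False
      then have "\<bar>m j - m i\<bar>\<^sup>2 \<le> osc\<^sup>2"
        using m_diff_le_osc[OF \<open>i < n\<close> that] by (intro power_mono) auto
      then have "(m j - m i)\<^sup>2 \<le> osc\<^sup>2" by simp
      then show ?thesis by (simp add: abs_mult mult_left_mono)
    qed simp
    then have "\<bar>\<Sum>j<n. Kt (int i - int j) * (m j - m i)\<^sup>2\<bar> \<le> (\<Sum>j<n. \<bar>Kt (int i - int j)\<bar>) * osc\<^sup>2"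
      unfolding sum_distrib_right by (intro order_trans[OF sum_abs] sum_mono) auto
    also have "\<dots> \<le> 3 * \<kappa> * osc\<^sup>2" by (rule mult_right_mono[OF Kt_row_abs_sum_le]) simp
    finally show ?thesis .
  qed
  then have "\<bar>\<Sum>i<n. \<Sum>j<n. Kt (int i - int j) * (m j - m i)\<^sup>2\<bar> \<le> real n * (3 * \<kappa> * osc\<^sup>2)"
    using order_trans[OF sum_abs sum_mono[of "{..<n}" _ "\<lambda>_. 3 * \<kappa> * osc\<^sup>2"]] by simp
  then show ?thesis unfolding sum_m_smooth_err by simp
qed

lemma abs_sum_m_edge_err_le:
  "\<bar>\<Sum>i<n. m i * edge_err i\<bar> \<le> 2 * real n * h * ((2 * M + M\<^sup>2)\<^sup>2 * (3 * \<kappa> + 1))"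
proof -
  have "\<bar>m i * edge_err i\<bar> \<le> (2 * M + M\<^sup>2) * ((2 * M + M\<^sup>2) * (3 * \<kappa> + 1))" for i
    unfolding abs_mult using abs_edge_err_le[of i] m_nonneg[of i] m_le[of i] by (intro mult_mono) auto
  then have "\<bar>m i * edge_err i\<bar> \<le> (2 * M + M\<^sup>2)\<^sup>2 * (3 * \<kappa> + 1)" for i
    by (simp add: power2_eq_square mult.assoc)
  then have "(\<Sum>i<n. \<bar>m i * edge_err i\<bar>) \<le> 2 * real n * h * ((2 * M + M\<^sup>2)\<^sup>2 * (3 * \<kappa> + 1))"
    by (intro sum_boundary_le) (auto simp: edge_err_interior)
  then show ?thesis by (rule order_trans[OF sum_abs])
qed

lemma abs_sum_m_diag_term_le: "\<bar>\<Sum>i<n. m i * diag_term i\<bar> \<le> 3 * (2 * M + M\<^sup>2)\<^sup>2"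
proof -
  have "\<bar>m i * diag_term i\<bar> \<le> (2 * M + M\<^sup>2) * (3 * (2 * M + M\<^sup>2) / real n)" for i
    unfolding abs_mult using m_nonneg[of i] m_le[of i] diag_term_bounds[of i] by (intro mult_mono) auto
  then have "\<bar>\<Sum>i<n. m i * diag_term i\<bar> \<le> real n * ((2 * M + M\<^sup>2) * (3 * (2 * M + M\<^sup>2) / real n))"
    using order_trans[OF sum_abs sum_mono[of "{..<n}" _ "\<lambda>_. (2 * M + M\<^sup>2) * (3 * (2 * M + M\<^sup>2) / real n)"]]
    by simp
  also have "real n * ((2 * M + M\<^sup>2) * (3 * (2 * M + M\<^sup>2) / real n)) = 3 * (2 * M + M\<^sup>2)\<^sup>2"
    using n_gt_0 by (simp add: field_simps power2_eq_square)
  finally show ?thesis .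
qed

lemma Wdev_nonneg: "0 \<le> Wdev"
  unfolding Wdev_def by (simp add: sum_nonneg)

lemma rate_ge:
  shows "real n powr (- 8 * a) \<le> rate" and "h powr (4 * \<beta>) \<le> rate" and "h\<^sup>2 \<le> rate"
    and "1 / ((real n)\<^sup>2 * h) \<le> rate" and "Wdev / (real n)\<^sup>2 \<le> rate" and "(1 / real n)\<^sup>2 \<le> rate"
proof -
  have terms: "0 \<le> real n powr (- 8 * a)" "0 \<le> h powr (4 * \<beta>)" "0 \<le> h\<^sup>2"
      "0 \<le> 1 / ((real n)\<^sup>2 * h)" "0 \<le> Wdev / (real n)\<^sup>2"
    using h_pos Wdev_nonneg by auto
  then show "real n powr (- 8 * a) \<le> rate" "h powr (4 * \<beta>) \<le> rate" "h\<^sup>2 \<le> rate"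
      "1 / ((real n)\<^sup>2 * h) \<le> rate" "Wdev / (real n)\<^sup>2 \<le> rate"
    unfolding rate_def by linarith+
  have "(1 / real n)\<^sup>2 \<le> 1 / ((real n)\<^sup>2 * h)"
    using h_pos h_less_1 n_gt_0 by (simp add: field_simps power2_eq_square)
  with terms show "(1 / real n)\<^sup>2 \<le> rate" unfolding rate_def by linarith
qed

lemma rate_ge_products:
  shows "h / real n \<le> rate" and "h powr (2 * \<beta>) / real n \<le> rate"
    and "real n powr (- 4 * a) / real n \<le> rate" and "1 / real n ^ 3 \<le> rate"
proof -
  have "(h powr (2 * \<beta>))\<^sup>2 = h powr (4 * \<beta>)" "(real n powr (- 4 * a))\<^sup>2 = real n powr (- 8 * a)"
    by (simp_all add: power2_eq_square powr_add[symmetric])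
  then show "h / real n \<le> rate" "h powr (2 * \<beta>) / real n \<le> rate" "real n powr (- 4 * a) / real n \<le> rate"
    using mult_le_of_squares_le[OF _ rate_ge(6)] rate_ge(2,3,1) by (metis times_divide_eq_right mult_1_right)+
  have "1 / real n ^ 3 \<le> (1 / real n)\<^sup>2"
    using n_ge_1 by (simp add: power_divide divide_left_mono power_increasing)
  then show "1 / real n ^ 3 \<le> rate" using rate_ge(6) by linarith
qed

lemma osc_sq_le: "osc\<^sup>2 \<le> 8 * M\<^sup>2 * h powr (2 * \<beta>) + 2 * M ^ 4 * real n powr (- 4 * a)"
proof -
  have "osc\<^sup>2 \<le> 2 * ((2 * M * h powr \<beta>)\<^sup>2 + (M\<^sup>2 * real n powr (- 2 * a))\<^sup>2)"
    unfolding osc_def using sq_sum3_le[of _ _ 0] by (smt (verit) power2_sum sum_squares_bound)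
  also have "\<dots> = 8 * M\<^sup>2 * (h powr \<beta>)\<^sup>2 + 2 * (M\<^sup>2)\<^sup>2 * (real n powr (- 2 * a))\<^sup>2"
    by (simp add: power_mult_distrib)
  also have "(h powr \<beta>)\<^sup>2 = h powr (2 * \<beta>)" using h_pos by (simp add: powr_power)
  also have "(real n powr (- 2 * a))\<^sup>2 = real n powr (- 4 * a)" using n_gt_0 by (simp add: powr_power)
  finally show ?thesis by (simp flip: power_mult)
qed

lemma osc_sq_div_n_le: "osc\<^sup>2 / real n \<le> (8 * M\<^sup>2 + 2 * M ^ 4) * rate"
proof -
  have "osc\<^sup>2 / real n \<le> 8 * M\<^sup>2 * (h powr (2 * \<beta>) / real n) + 2 * M ^ 4 * (real n powr (- 4 * a) / real n)"
    using divide_right_mono[OF osc_sq_le, of "real n"] by (simp add: add_divide_distrib)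
  also have "\<dots> \<le> 8 * M\<^sup>2 * rate + 2 * M ^ 4 * rate"
    using rate_ge_products(2,3) by (intro add_mono mult_left_mono) auto
  finally show ?thesis by (simp add: algebra_simps)
qed

lemma osc_pow4_le: "(osc\<^sup>2)\<^sup>2 \<le> (128 * M ^ 4 + 8 * M ^ 8) * rate"
proof -
  have "(osc\<^sup>2)\<^sup>2 \<le> (8 * M\<^sup>2 * h powr (2 * \<beta>) + 2 * M ^ 4 * real n powr (- 4 * a))\<^sup>2"
    by (rule power_mono[OF osc_sq_le]) simp
  also have "\<dots> \<le> 2 * ((8 * M\<^sup>2 * h powr (2 * \<beta>))\<^sup>2 + (2 * M ^ 4 * real n powr (- 4 * a))\<^sup>2)"
    by (smt (verit) power2_sum sum_squares_bound)
  also have "\<dots> = 128 * (M\<^sup>2)\<^sup>2 * (h powr (2 * \<beta>))\<^sup>2 + 8 * (M ^ 4)\<^sup>2 * (real n powr (- 4 * a))\<^sup>2"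
    by (simp add: power_mult_distrib)
  also have "(h powr (2 * \<beta>))\<^sup>2 = h powr (4 * \<beta>)" using h_pos by (simp add: powr_power)
  also have "(real n powr (- 4 * a))\<^sup>2 = real n powr (- 8 * a)" using n_gt_0 by (simp add: powr_power)
  also have "(M\<^sup>2)\<^sup>2 = M ^ 4" by (simp flip: power_mult)
  also have "(M ^ 4)\<^sup>2 = M ^ 8" by (simp flip: power_mult)
  also have "128 * M ^ 4 * h powr (4 * \<beta>) + 8 * M ^ 8 * real n powr (- 8 * a) \<le> 128 * M ^ 4 * rate + 8 * M ^ 8 * rate"
    using rate_ge(1,2) by (intro add_mono mult_left_mono) auto
  finally show ?thesis by (simp add: algebra_simps)
qed

lemma bias_sq_le: "(bias_term - target)\<^sup>2 \<le> bias_const M \<kappa> * rate"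
proof -
  define A where "A = 2 * M + M\<^sup>2"
  define p q r where "p = 3/2 * \<kappa> * osc\<^sup>2" and "q = 2 * h * (A\<^sup>2 * (3 * \<kappa> + 1))"
    and "r = 3 * A\<^sup>2 * (1 / real n)"
  have "\<bar>bias_term - target\<bar> \<le>
      (\<bar>\<Sum>i<n. m i * smooth_err i\<bar> + \<bar>\<Sum>i<n. m i * edge_err i\<bar> + \<bar>\<Sum>i<n. m i * diag_term i\<bar>) / real n"
    unfolding bias_term_minus_target using n_gt_0 by (simp add: abs_div divide_right_mono abs_triangle_ineq4)
  also have "\<dots> \<le> (3/2 * real n * \<kappa> * osc\<^sup>2 + 2 * real n * h * (A\<^sup>2 * (3 * \<kappa> + 1)) + 3 * A\<^sup>2) / real n"
    unfolding A_def using abs_sum_m_smooth_err_le abs_sum_m_edge_err_le abs_sum_m_diag_term_le n_gt_0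
    by (intro divide_right_mono add_mono) auto
  also have "\<dots> = p + q + r"
    unfolding p_def q_def r_def using n_gt_0 by (simp add: field_simps)
  finally have "(bias_term - target)\<^sup>2 \<le> (p + q + r)\<^sup>2"
    using power_mono[of "\<bar>bias_term - target\<bar>" "p + q + r" 2] by simp
  also have "\<dots> \<le> 3 * (p\<^sup>2 + q\<^sup>2 + r\<^sup>2)" by (rule sq_sum3_le)
  also have "p\<^sup>2 + q\<^sup>2 + r\<^sup>2 = 9/4 * \<kappa>\<^sup>2 * (osc\<^sup>2)\<^sup>2 + 4 * A ^ 4 * (3 * \<kappa> + 1)\<^sup>2 * h\<^sup>2 + 9 * A ^ 4 * (1 / real n)\<^sup>2"
    unfolding p_def q_def r_def by (simp add: power_mult_distrib power_divide flip: power_mult)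
  also have "\<dots> \<le> 9/4 * \<kappa>\<^sup>2 * ((128 * M ^ 4 + 8 * M ^ 8) * rate) + 4 * A ^ 4 * (3 * \<kappa> + 1)\<^sup>2 * rate
      + 9 * A ^ 4 * rate"
    using osc_pow4_le rate_ge(3,6) by (intro add_mono mult_left_mono) auto
  finally show ?thesis
    unfolding bias_const_def A_def[symmetric] by (simp add: algebra_simps)
qed

lemma lin_coef_eq: "lin_coef i = 2 * (smooth_err i + edge_err i + (m i - mbar) + diag_term i) / real n"
proof -
  have "lin_coef i = 2 * (\<Sum>j<n. quad_coef i j * m j)"
    unfolding lin_coef_def by (simp add: sum_distrib_left mult.assoc)
  then show ?thesis unfolding quad_coef_row by simp
qed

lemma sum_sq_m_centered_le: "(\<Sum>i<n. (m i - mbar)\<^sup>2) \<le> 2 * Wdev + 2 * real n * (M ^ 4 * real n powr (- 4 * a))"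
proof -
  define db where "db = (\<Sum>i<n. d i) / real n"
  have "mbar = Wb + db"
    unfolding mbar_def Wb_def db_def m_def by (simp add: sum.distrib add_divide_distrib)
  have "0 \<le> db" "db \<le> M\<^sup>2 * real n powr (- 2 * a)"
    unfolding db_def using sum_mono[of "{..<n}" d "\<lambda>_. M\<^sup>2 * real n powr (- 2 * a)"] d_le n_gt_0
    by (auto simp: sum_nonneg d_nonneg divide_le_eq mult.commute)
  have "(m i - mbar)\<^sup>2 \<le> 2 * (W i - Wb)\<^sup>2 + 2 * (M ^ 4 * real n powr (- 4 * a))" for i
  proof -
    have "\<bar>d i - db\<bar> \<le> M\<^sup>2 * real n powr (- 2 * a)"
      using \<open>0 \<le> db\<close> \<open>db \<le> _\<close> d_nonneg[of i] d_le[of i] by linarith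
    then have "(d i - db)\<^sup>2 \<le> (M\<^sup>2 * real n powr (- 2 * a))\<^sup>2"
      using power_mono[of "\<bar>d i - db\<bar>" _ 2] by simp
    also have "\<dots> = M ^ 4 * real n powr (- 4 * a)"
      using n_gt_0 by (simp add: power_mult_distrib powr_power flip: power_mult)
    finally have "(d i - db)\<^sup>2 \<le> M ^ 4 * real n powr (- 4 * a)" .
    moreover have "m i - mbar = (W i - Wb) + (d i - db)" unfolding \<open>mbar = Wb + db\<close> m_def by simp
    ultimately show ?thesis using sq_sum3_le[of "W i - Wb" "d i - db" 0] by (smt (verit) power2_sum sum_squares_bound)
  qed
  then have "(\<Sum>i<n. (m i - mbar)\<^sup>2) \<le> (\<Sum>i<n. 2 * (W i - Wb)\<^sup>2 + 2 * (M ^ 4 * real n powr (- 4 * a)))"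
    by (intro sum_mono)
  also have "\<dots> = 2 * Wdev + 2 * real n * (M ^ 4 * real n powr (- 4 * a))"
    unfolding Wdev_def by (simp add: sum.distrib sum_distrib_left)
  finally show ?thesis .
qed

lemma sum_sq_lin_coef_le_components:
  "(\<Sum>i<n. (lin_coef i)\<^sup>2) \<le> 16 / (real n)\<^sup>2 * ((\<Sum>i<n. (smooth_err i)\<^sup>2)
    + (\<Sum>i<n. (edge_err i)\<^sup>2) + (\<Sum>i<n. (m i - mbar)\<^sup>2) + (\<Sum>i<n. (diag_term i)\<^sup>2))"
proof -
  have "(lin_coef i)\<^sup>2 \<le> 4 / (real n)\<^sup>2 *
      (4 * ((smooth_err i)\<^sup>2 + (edge_err i)\<^sup>2 + (m i - mbar)\<^sup>2 + (diag_term i)\<^sup>2))" for i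
  proof -
    have "(lin_coef i)\<^sup>2 = (2 / real n)\<^sup>2 * (smooth_err i + edge_err i + (m i - mbar) + diag_term i)\<^sup>2"
      unfolding lin_coef_eq power_mult_distrib[symmetric] by simp
    also have "(2 / real n)\<^sup>2 = 4 / (real n)\<^sup>2" by (simp add: power_divide)
    also have "4 / (real n)\<^sup>2 * (smooth_err i + edge_err i + (m i - mbar) + diag_term i)\<^sup>2 \<le> 4 / (real n)\<^sup>2 *
        (4 * ((smooth_err i)\<^sup>2 + (edge_err i)\<^sup>2 + (m i - mbar)\<^sup>2 + (diag_term i)\<^sup>2))"
      by (rule mult_left_mono[OF sq_sum4_le]) simp
    finally show ?thesis .
  qed
  then have "(\<Sum>i<n. (lin_coef i)\<^sup>2) \<le> (\<Sum>i<n. 4 / (real n)\<^sup>2 *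
      (4 * ((smooth_err i)\<^sup>2 + (edge_err i)\<^sup>2 + (m i - mbar)\<^sup>2 + (diag_term i)\<^sup>2)))"
    by (rule sum_mono)
  then show ?thesis
    by (simp add: sum_divide_distrib[symmetric] sum.distrib sum_distrib_left[symmetric])
qed

lemma sum_sq_smooth_err_le: "(\<Sum>i<n. (smooth_err i)\<^sup>2) \<le> real n * (3 * \<kappa> * osc)\<^sup>2"
proof -
  have "(smooth_err i)\<^sup>2 \<le> (3 * \<kappa> * osc)\<^sup>2" if "i < n" for i
    using power_mono[OF abs_smooth_err_le[OF that], of 2] by simp
  then show ?thesis
    using sum_mono[of "{..<n}" "\<lambda>i. (smooth_err i)\<^sup>2" "\<lambda>_. (3 * \<kappa> * osc)\<^sup>2"] by simp
qed

lemma sum_sq_edge_err_le: "(\<Sum>i<n. (edge_err i)\<^sup>2) \<le> 2 * real n * h * ((2 * M + M\<^sup>2) * (3 * \<kappa> + 1))\<^sup>2"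
proof -
  have "(edge_err i)\<^sup>2 \<le> ((2 * M + M\<^sup>2) * (3 * \<kappa> + 1))\<^sup>2" for i
    using power_mono[OF abs_edge_err_le, of i 2] by simp
  then show ?thesis by (intro sum_boundary_le) (auto simp: edge_err_interior)
qed

lemma sum_sq_diag_term_le: "(\<Sum>i<n. (diag_term i)\<^sup>2) \<le> real n * (3 * (2 * M + M\<^sup>2) / real n)\<^sup>2"
proof -
  have "(diag_term i)\<^sup>2 \<le> (3 * (2 * M + M\<^sup>2) / real n)\<^sup>2" for i
    using power_mono[OF diag_term_bounds(2), of i 2] diag_term_bounds(1)[of i] by simp
  then show ?thesis
    using sum_mono[of "{..<n}" "\<lambda>i. (diag_term i)\<^sup>2" "\<lambda>_. (3 * (2 * M + M\<^sup>2) / real n)\<^sup>2"] by simp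
qed

lemma sum_sq_lin_coef_le: "(\<Sum>i<n. (lin_coef i)\<^sup>2) \<le> lin_const M \<kappa> * rate"
proof -
  define A where "A = 2 * M + M\<^sup>2"
  note sum_sq_lin_coef_le_components
  also have "16 / (real n)\<^sup>2 * ((\<Sum>i<n. (smooth_err i)\<^sup>2) + (\<Sum>i<n. (edge_err i)\<^sup>2)
      + (\<Sum>i<n. (m i - mbar)\<^sup>2) + (\<Sum>i<n. (diag_term i)\<^sup>2))
    \<le> 16 / (real n)\<^sup>2 * (real n * (3 * \<kappa> * osc)\<^sup>2 + 2 * real n * h * (A * (3 * \<kappa> + 1))\<^sup>2
      + (2 * Wdev + 2 * real n * (M ^ 4 * real n powr (- 4 * a))) + real n * (3 * A / real n)\<^sup>2)"
    unfolding A_def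
    using sum_sq_smooth_err_le sum_sq_edge_err_le sum_sq_m_centered_le sum_sq_diag_term_le
    by (intro mult_left_mono add_mono) auto
  also have "\<dots> = 16 * (9 * \<kappa>\<^sup>2 * (osc\<^sup>2 / real n) + 2 * A\<^sup>2 * (3 * \<kappa> + 1)\<^sup>2 * (h / real n)
      + 2 * (Wdev / (real n)\<^sup>2) + 2 * M ^ 4 * (real n powr (- 4 * a) / real n) + 9 * A\<^sup>2 * (1 / real n ^ 3))"
    using n_gt_0 by (simp add: field_simps power2_eq_square power3_eq_cube)
  also have "\<dots> \<le> 16 * (9 * \<kappa>\<^sup>2 * ((8 * M\<^sup>2 + 2 * M ^ 4) * rate) + 2 * A\<^sup>2 * (3 * \<kappa> + 1)\<^sup>2 * rate
      + 2 * rate + 2 * M ^ 4 * rate + 9 * A\<^sup>2 * rate)"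
    using osc_sq_div_n_le rate_ge(5) rate_ge_products(1,3,4)
    by (intro mult_left_mono add_mono) auto
  finally show ?thesis
    unfolding lin_const_def A_def[symmetric] by (simp add: algebra_simps)
qed

lemma abs_quad_coef_le: "\<bar>quad_coef i j\<bar> \<le> (\<kappa> + 1) / ((real n)\<^sup>2 * h)"
proof -
  have "\<bar>Kt (int i - int j) / real n\<bar> \<le> \<kappa> / ((real n)\<^sup>2 * h)"
    using Kt_abs_le[of "int i - int j"] n_gt_0 h_pos by (simp add: abs_div field_simps power2_eq_square)
  moreover have "1 / (real n)\<^sup>2 \<le> 1 / ((real n)\<^sup>2 * h)"
    using h_pos h_less_1 n_gt_0 by (simp add: field_simps)
  ultimately show ?thesis
    unfolding quad_coef_def using \<kappa>_nonneg h_pos abs_triangle_ineq4[of "Kt (int i - int j) / real n" "1 / (real n)\<^sup>2"]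
    by (auto simp: add_divide_distrib)
qed

lemma sum_abs_quad_coef_le: "(\<Sum>i<n. \<Sum>j<n. \<bar>quad_coef i j\<bar>) \<le> 3 * \<kappa> + 1"
proof -
  have "(\<Sum>j<n. \<bar>quad_coef i j\<bar>) \<le> (\<Sum>j<n. \<bar>Kt (int i - int j)\<bar>) / real n + real n / (real n)\<^sup>2" for i
  proof -
    have "\<bar>quad_coef i j\<bar> \<le> \<bar>Kt (int i - int j)\<bar> / real n + 1 / (real n)\<^sup>2" for j
      unfolding quad_coef_def using n_gt_0 abs_triangle_ineq4[of "Kt (int i - int j) / real n" "1 / (real n)\<^sup>2"]
      by (auto simp: abs_div)
    then have "(\<Sum>j<n. \<bar>quad_coef i j\<bar>) \<le> (\<Sum>j<n. \<bar>Kt (int i - int j)\<bar> / real n + 1 / (real n)\<^sup>2)"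
      by (rule sum_mono)
    also have "\<dots> = (\<Sum>j<n. \<bar>Kt (int i - int j)\<bar>) / real n + real n / (real n)\<^sup>2"
      by (simp add: sum.distrib sum_divide_distrib)
    finally show ?thesis .
  qed
  then have "(\<Sum>i<n. \<Sum>j<n. \<bar>quad_coef i j\<bar>)
      \<le> (\<Sum>i<n. (\<Sum>j<n. \<bar>Kt (int i - int j)\<bar>) / real n + real n / (real n)\<^sup>2)"
    by (rule sum_mono)
  also have "\<dots> \<le> (\<Sum>i<n. 3 * \<kappa> / real n + 1 / real n)"
    using Kt_row_abs_sum_le n_gt_0 by (intro sum_mono) (simp add: divide_right_mono power2_eq_square)
  also have "\<dots> = 3 * \<kappa> + 1" using n_gt_0 by (simp add: field_simps)
  finally show ?thesis .
qed

lemma quad_form_decomposition: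
  "(\<Sum>i<n. \<Sum>j<n. quad_coef i j * (y i * y j)) = bias_term + (\<Sum>i<n. lin_coef i * (y i - m i))
     + (\<Sum>i<n. \<Sum>j<n. quad_coef i j * ((y i - m i) * (y j - m j)))"
proof -
  define e where "e i = y i - m i" for i
  have y: "y i = m i + e i" for i unfolding e_def by simp
  have swap: "(\<Sum>i<n. \<Sum>j<n. quad_coef i j * (m i * e j)) = (\<Sum>i<n. \<Sum>j<n. quad_coef i j * (e i * m j))"
    by (subst sum.swap) (simp add: quad_coef_sym mult.commute)
  have "(\<Sum>i<n. lin_coef i * e i) = (\<Sum>i<n. \<Sum>j<n. quad_coef i j * (m i * e j) + quad_coef i j * (e i * m j))"
    unfolding lin_coef_def swap sum.distrib by (simp add: sum_distrib_left sum_distrib_right algebra_simps)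
  then show ?thesis
    unfolding y bias_term_def e_def[symmetric] by (simp add: sum.distrib algebra_simps)
qed

lemma statistic_decomposition:
  assumes "Kt = Knh K n h" and "\<And>i. i < n \<Longrightarrow> (diffR n f V \<xi> i \<omega>)\<^sup>2 = m i + e i"
  shows "That K n h f V \<xi> \<omega> = bias_term + (\<Sum>i<n. lin_coef i * e i) + (\<Sum>i<n. \<Sum>j<n. quad_coef i j * (e i * e j))"
proof -
  define y where "y i = (diffR n f V \<xi> i \<omega>)\<^sup>2" for i
  have entry: "quad_coef i j * (y i * y j)
      = 1 / real n * (if 2 \<le> \<bar>int i - int j\<bar> then Knh K n h (int i - int j) * y i * y j else 0)
        - 1 / (real n)\<^sup>2 * (if 2 \<le> \<bar>int i - int j\<bar> then y i * y j else 0)" for i j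
    unfolding quad_coef_def by (simp add: assms(1) algebra_simps)
  have "(\<Sum>i<n. \<Sum>j<n. quad_coef i j * (y i * y j))
      = 1 / real n * (\<Sum>i<n. \<Sum>j<n. if 2 \<le> \<bar>int i - int j\<bar> then Knh K n h (int i - int j) * y i * y j else 0)
        - 1 / (real n)\<^sup>2 * (\<Sum>i<n. \<Sum>j<n. if 2 \<le> \<bar>int i - int j\<bar> then y i * y j else 0)"
    unfolding entry by (simp only: sum_subtractf sum_distrib_left)
  then have "That K n h f V \<xi> \<omega> = (\<Sum>i<n. \<Sum>j<n. quad_coef i j * (y i * y j))"
    unfolding That_def y_def by simp
  also have "\<dots> = bias_term + (\<Sum>i<n. lin_coef i * (y i - m i)) + (\<Sum>i<n. \<Sum>j<n. quad_coef i j * ((y i - m i) * (y j - m j)))"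
    by (rule quad_form_decomposition)
  finally show ?thesis unfolding y_def using assms(2) by simp
qed

lemma Ttarget_Wdev2_eq:
  assumes "\<And>i. i < n \<Longrightarrow> W i = Wv n V i" and "\<And>i. i < n \<Longrightarrow> d i = (deltav n f i)\<^sup>2"
  shows "Ttarget n f V = target" and "Wdev2 n V = Wdev"
proof -
  have Wb: "Wb = Wbar n V" unfolding Wb_def Wbar_def using assms(1) by simp
  have "mbar = Wbar n V + delta2bar n f"
    unfolding mbar_def Wbar_def delta2bar_def m_def using assms by (simp add: sum.distrib add_divide_distrib)
  then show "Ttarget n f V = target"
    unfolding Ttarget_def target_def m_def using assms by (simp add: diff_diff_eq)
  show "Wdev2 n V = Wdev" unfolding Wdev2_def Wdev_def Wb using assms(1) by simp
qed

end

lemma kernel_design_instance: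
  assumes K: "is_kernel K" "\<And>x. \<bar>K x\<bar> \<le> B" and c: "c > 0" "\<bar>kden K n h\<bar> \<ge> c"
    and n: "n \<ge> 1" and h: "0 < h" "h < 1" and \<alpha>: "\<alpha> > 0" and \<beta>: "0 < \<beta>" "\<beta> < 1"
    and f: "f \<in> holder_class \<alpha> M" and V: "V \<in> holder_class \<beta> M" "\<forall>x\<in>{0..1}. 0 \<le> V x"
  shows "kernel_design n h M \<beta> (min \<alpha> 1) (B / c) (nat \<lfloor>real n * h\<rfloor>) (Knh K n h)
    (\<lambda>i. if i < n then Wv n V i else 0) (\<lambda>i. if i < n then (deltav n f i)\<^sup>2 else 0)"
proof
  have "h > 2 / real n" by (rule kden_bound_imp_bandwidth_gt[OF K(1) h(1) c])
  then show nh: "1 \<le> real n * h" using n by (simp add: field_simps)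
  show "real (nat \<lfloor>real n * h\<rfloor>) \<le> real n * h" using nh by linarith
  show "\<bar>Knh K n h t\<bar> \<le> B / c / (real n * h)" for t
    using Knh_abs_le[OF K(1) h(1) n c K(2)] by (simp add: field_simps)
  show "0 \<le> B / c" using K(2)[of 0] c(1) by simp
  show "Knh K n h t = 0" if "int (nat \<lfloor>real n * h\<rfloor>) < \<bar>t\<bar>" for t
    using that nh by (intro Knh_eq_0_far[OF K(1) h(1) n]) linarith
  show "(\<Sum>j<n. Knh K n h (int i - int j)) = 1"
    if "nat \<lfloor>real n * h\<rfloor> \<le> i" "i + nat \<lfloor>real n * h\<rfloor> < n" for i
    by (rule Knh_row_sum[OF K(1) h(1) n c that])
  have "0 \<le> M" using holder_class_bounded[OF V(1), of 0] by auto
  then show "0 \<le> (if i < n then Wv n V i else 0)" "(if i < n then Wv n V i else 0) \<le> 2 * M" for i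
    using nonneg_holder_grid_bounds[OF V, of i n] nonneg_holder_grid_bounds[OF V, of "Suc i" n]
    unfolding Wv_def by auto
  show "\<bar>(if i < n then Wv n V i else 0) - (if j < n then Wv n V j else 0)\<bar>
      \<le> 2 * M * (\<bar>real i - real j\<bar> / real n) powr \<beta>" if "i < n" "j < n" for i j
    using Wv_holder[OF V(1) \<beta> that] that by simp
  show "(if i < n then (deltav n f i)\<^sup>2 else 0) \<le> M\<^sup>2 * real n powr (- 2 * min \<alpha> 1)" for i
    using deltav_sq_le[OF f \<alpha>, of i n] by simp
qed (use n h \<alpha> \<beta> Knh_minus Knh_eq_0_near in auto)

section \<open>Moments of one-dependent sequences\<close>

lemma (in prob_space) integrable_mult_of_squares:
  fixes X Y :: "'a \<Rightarrow> real"
  assumes [measurable]: "X \<in> borel_measurable M" "Y \<in> borel_measurable M"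
    and "integrable M (\<lambda>\<omega>. (X \<omega>)\<^sup>2)" "integrable M (\<lambda>\<omega>. (Y \<omega>)\<^sup>2)"
  shows "integrable M (\<lambda>\<omega>. X \<omega> * Y \<omega>)"
    and "\<bar>expectation (\<lambda>\<omega>. X \<omega> * Y \<omega>)\<bar> \<le> (expectation (\<lambda>\<omega>. (X \<omega>)\<^sup>2) + expectation (\<lambda>\<omega>. (Y \<omega>)\<^sup>2)) / 2"
proof -
  have bound: "\<bar>X \<omega> * Y \<omega>\<bar> \<le> ((X \<omega>)\<^sup>2 + (Y \<omega>)\<^sup>2) / 2" for \<omega>
  proof -
    have "0 \<le> (\<bar>X \<omega>\<bar> - \<bar>Y \<omega>\<bar>)\<^sup>2" by simp
    then show ?thesis by (simp add: power2_eq_square algebra_simps abs_mult)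
  qed
  have int: "integrable M (\<lambda>\<omega>. ((X \<omega>)\<^sup>2 + (Y \<omega>)\<^sup>2) / 2)" using assms(3,4) by auto
  show I: "integrable M (\<lambda>\<omega>. X \<omega> * Y \<omega>)"
    by (rule Bochner_Integration.integrable_bound[OF int]) (use bound in \<open>auto intro!: AE_I2\<close>)
  have "\<bar>expectation (\<lambda>\<omega>. X \<omega> * Y \<omega>)\<bar> \<le> expectation (\<lambda>\<omega>. ((X \<omega>)\<^sup>2 + (Y \<omega>)\<^sup>2) / 2)"
    by (rule order_trans[OF integral_abs_bound integral_mono]) (use I int bound in auto)
  also have "\<dots> = (expectation (\<lambda>\<omega>. (X \<omega>)\<^sup>2) + expectation (\<lambda>\<omega>. (Y \<omega>)\<^sup>2)) / 2"
    using assms(3,4) by simp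
  finally show "\<bar>expectation (\<lambda>\<omega>. X \<omega> * Y \<omega>)\<bar> \<le> (expectation (\<lambda>\<omega>. (X \<omega>)\<^sup>2) + expectation (\<lambda>\<omega>. (Y \<omega>)\<^sup>2)) / 2" .
qed

lemma (in prob_space) expectation_double_sum:
  fixes T :: "'i \<Rightarrow> 'j \<Rightarrow> 'a \<Rightarrow> real"
  assumes "\<And>i k. i \<in> A \<Longrightarrow> k \<in> B \<Longrightarrow> integrable M (T i k)"
  shows "integrable M (\<lambda>\<omega>. \<Sum>i\<in>A. \<Sum>k\<in>B. T i k \<omega>)"
    and "expectation (\<lambda>\<omega>. \<Sum>i\<in>A. \<Sum>k\<in>B. T i k \<omega>) = (\<Sum>i\<in>A. \<Sum>k\<in>B. expectation (T i k))"
  using assms by (auto intro!: Bochner_Integration.integrable_sum simp: Bochner_Integration.integral_sum)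

locale indep_seq = prob_space P for P :: "'a measure" +
  fixes \<xi> :: "nat \<Rightarrow> 'a \<Rightarrow> real"
  assumes \<xi>_measurable[measurable]: "\<And>i. \<xi> i \<in> borel_measurable P"
    and \<xi>_indep: "indep_vars (\<lambda>_. borel) \<xi> UNIV"
begin

lemma indep_var_restrict:
  assumes "A \<inter> B = {}"
    and "G \<in> borel_measurable (PiM A (\<lambda>_. borel))" "H \<in> borel_measurable (PiM B (\<lambda>_. borel))"
  shows "indep_var borel (\<lambda>\<omega>. G (restrict (\<lambda>q. \<xi> q \<omega>) A)) borel (\<lambda>\<omega>. H (restrict (\<lambda>q. \<xi> q \<omega>) B))"
  using indep_var_compose[OF indep_var_restrict[OF \<xi>_indep assms(1)] assms(2,3)]
  by (simp add: comp_def)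

end

locale iid_noise = indep_seq +
  assumes \<xi>_distr: "\<And>i. distr P borel (\<xi> i) = distr P borel (\<xi> 0)"
    and \<xi>0_integrable: "integrable P (\<xi> 0)" and \<xi>0_mean: "expectation (\<xi> 0) = 0"
    and \<xi>0_sq_integrable: "integrable P (\<lambda>\<omega>. (\<xi> 0 \<omega>)\<^sup>2)" and \<xi>0_variance: "expectation (\<lambda>\<omega>. (\<xi> 0 \<omega>)\<^sup>2) = 1"
    and \<xi>0_pow4_integrable: "integrable P (\<lambda>\<omega>. (\<xi> 0 \<omega>) ^ 4)"
begin

definition "mu4 = expectation (\<lambda>\<omega>. (\<xi> 0 \<omega>) ^ 4)"

lemma \<xi>_fun_moment:
  fixes g :: "real \<Rightarrow> real"
  assumes g: "g \<in> borel_measurable borel" and "integrable P (\<lambda>\<omega>. g (\<xi> 0 \<omega>))"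
  shows "integrable P (\<lambda>\<omega>. g (\<xi> i \<omega>))" and "expectation (\<lambda>\<omega>. g (\<xi> i \<omega>)) = expectation (\<lambda>\<omega>. g (\<xi> 0 \<omega>))"
proof -
  have "integrable (distr P borel (\<xi> i)) g"
    using assms(2) integrable_distr_eq[OF \<xi>_measurable g] \<xi>_distr[of i] by simp
  then show "integrable P (\<lambda>\<omega>. g (\<xi> i \<omega>))" using integrable_distr_eq[OF \<xi>_measurable g] by simp
  have "expectation (\<lambda>\<omega>. g (\<xi> i \<omega>)) = integral\<^sup>L (distr P borel (\<xi> i)) g"
    using integral_distr[OF \<xi>_measurable g] by simp
  also have "\<dots> = expectation (\<lambda>\<omega>. g (\<xi> 0 \<omega>))"
    using integral_distr[OF \<xi>_measurable g] \<xi>_distr[of i] by simp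
  finally show "expectation (\<lambda>\<omega>. g (\<xi> i \<omega>)) = expectation (\<lambda>\<omega>. g (\<xi> 0 \<omega>))" .
qed

lemma \<xi>_moments:
  shows "integrable P (\<xi> i)" and "expectation (\<xi> i) = 0"
    and "integrable P (\<lambda>\<omega>. (\<xi> i \<omega>)\<^sup>2)" and "expectation (\<lambda>\<omega>. (\<xi> i \<omega>)\<^sup>2) = 1"
    and "integrable P (\<lambda>\<omega>. (\<xi> i \<omega>) ^ 4)" and "expectation (\<lambda>\<omega>. (\<xi> i \<omega>) ^ 4) = mu4"
  using \<xi>_fun_moment[of "\<lambda>x. x" i] \<xi>_fun_moment[of "\<lambda>x. x\<^sup>2" i] \<xi>_fun_moment[of "\<lambda>x. x ^ 4" i]
    \<xi>0_integrable \<xi>0_mean \<xi>0_sq_integrable \<xi>0_variance \<xi>0_pow4_integrable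
  unfolding mu4_def by auto

lemma mu4_nonneg: "0 \<le> mu4"
  unfolding mu4_def by (rule integral_nonneg_AE) (simp add: zero_le_even_power)

lemma \<xi>_mult_\<xi>:
  assumes "i \<noteq> j"
  shows "integrable P (\<lambda>\<omega>. \<xi> i \<omega> * \<xi> j \<omega>)" and "expectation (\<lambda>\<omega>. \<xi> i \<omega> * \<xi> j \<omega>) = 0"
proof -
  have "indep_var borel (\<lambda>\<omega>. (\<lambda>x. x i) (restrict (\<lambda>q. \<xi> q \<omega>) {i}))
      borel (\<lambda>\<omega>. (\<lambda>x. x j) (restrict (\<lambda>q. \<xi> q \<omega>) {j}))"
    by (rule indep_var_restrict) (use assms in \<open>auto intro: measurable_component_singleton\<close>)
  then have indep: "indep_var borel (\<xi> i) borel (\<xi> j)" by simp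
  show "integrable P (\<lambda>\<omega>. \<xi> i \<omega> * \<xi> j \<omega>)"
    using indep_var_integrable[OF indep \<xi>_moments(1) \<xi>_moments(1)] .
  show "expectation (\<lambda>\<omega>. \<xi> i \<omega> * \<xi> j \<omega>) = 0"
    using indep_var_lebesgue_integral[OF indep \<xi>_moments(1) \<xi>_moments(1)] \<xi>_moments(2) by simp
qed

lemma increment_moments:
  fixes \<delta> a b :: real and i :: nat
  defines "R \<equiv> \<lambda>\<omega>. \<delta> + a * \<xi> (Suc i) \<omega> - b * \<xi> i \<omega>" and "s \<equiv> \<delta>\<^sup>2 + a\<^sup>2 + b\<^sup>2"
  shows "integrable P (\<lambda>\<omega>. (R \<omega>)\<^sup>2)" and "expectation (\<lambda>\<omega>. (R \<omega>)\<^sup>2) = s"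
    and "integrable P (\<lambda>\<omega>. ((R \<omega>)\<^sup>2 - s)\<^sup>2)"
    and "expectation (\<lambda>\<omega>. ((R \<omega>)\<^sup>2 - s)\<^sup>2) \<le> 54 * (\<delta> ^ 4 + (a ^ 4 + b ^ 4) * mu4) + 2 * s\<^sup>2"
proof -
  have sq: "(R \<omega>)\<^sup>2 = \<delta>\<^sup>2 + a\<^sup>2 * (\<xi> (Suc i) \<omega>)\<^sup>2 + b\<^sup>2 * (\<xi> i \<omega>)\<^sup>2
      + (2 * \<delta> * a * \<xi> (Suc i) \<omega> - 2 * \<delta> * b * \<xi> i \<omega> - 2 * a * b * (\<xi> i \<omega> * \<xi> (Suc i) \<omega>))" for \<omega>
    unfolding R_def by (simp add: power2_eq_square algebra_simps)
  have "has_bochner_integral P (\<lambda>\<omega>. (R \<omega>)\<^sup>2) (\<delta>\<^sup>2 + a\<^sup>2 * 1 + b\<^sup>2 * 1 + (2 * \<delta> * a * 0 - 2 * \<delta> * b * 0 - 2 * a * b * 0))"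
    unfolding sq using \<xi>_moments(1-4) \<xi>_mult_\<xi>[of i "Suc i"] prob_space
    by (intro has_bochner_integral_add has_bochner_integral_diff has_bochner_integral_mult_right)
      (auto simp: has_bochner_integral_iff)
  then show R_int: "integrable P (\<lambda>\<omega>. (R \<omega>)\<^sup>2)" and "expectation (\<lambda>\<omega>. (R \<omega>)\<^sup>2) = s"
    unfolding s_def by (auto simp: has_bochner_integral_iff)
  define B where "B \<omega> = 54 * (\<delta> ^ 4 + a ^ 4 * (\<xi> (Suc i) \<omega>) ^ 4 + b ^ 4 * (\<xi> i \<omega>) ^ 4) + 2 * s\<^sup>2" for \<omega>
  have bound: "((R \<omega>)\<^sup>2 - s)\<^sup>2 \<le> B \<omega>" for \<omega>
  proof -
    have "0 \<le> ((R \<omega>)\<^sup>2 + s)\<^sup>2" by simp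
    then have "((R \<omega>)\<^sup>2 - s)\<^sup>2 \<le> 2 * ((R \<omega>)\<^sup>2)\<^sup>2 + 2 * s\<^sup>2" by (simp add: power2_eq_square algebra_simps)
    also have "((R \<omega>)\<^sup>2)\<^sup>2 = (R \<omega>) ^ 4" by (simp flip: power_mult)
    also have "(R \<omega>) ^ 4 \<le> 27 * (\<delta> ^ 4 + a ^ 4 * (\<xi> (Suc i) \<omega>) ^ 4 + b ^ 4 * (\<xi> i \<omega>) ^ 4)"
      using pow4_sum3_le[of \<delta> "a * \<xi> (Suc i) \<omega>" "- b * \<xi> i \<omega>"] unfolding R_def by (simp add: power_mult_distrib)
    finally show ?thesis unfolding B_def by linarith
  qed
  have B_int: "integrable P B" unfolding B_def using \<xi>_moments(5) by auto
  have [measurable]: "R \<in> borel_measurable P" unfolding R_def by measurable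
  show sq_int: "integrable P (\<lambda>\<omega>. ((R \<omega>)\<^sup>2 - s)\<^sup>2)"
    by (rule Bochner_Integration.integrable_bound[OF B_int])
      (use bound in \<open>auto intro!: AE_I2 order_trans[OF _ abs_ge_self]\<close>)
  have "expectation B = 54 * (\<delta> ^ 4 + (a ^ 4 + b ^ 4) * mu4) + 2 * s\<^sup>2"
    unfolding B_def using \<xi>_moments(5,6) prob_space by (simp add: algebra_simps)
  then show "expectation (\<lambda>\<omega>. ((R \<omega>)\<^sup>2 - s)\<^sup>2) \<le> 54 * (\<delta> ^ 4 + (a ^ 4 + b ^ 4) * mu4) + 2 * s\<^sup>2"
    using integral_mono[OF sq_int B_int bound] by simp
qed

end

locale one_dependent = indep_seq +
  fixes F :: "nat \<Rightarrow> real \<times> real \<Rightarrow> real" and \<sigma>2 :: real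
  assumes F_measurable[measurable]: "\<And>i. F i \<in> borel_measurable borel"
    and F_sq_integrable: "\<And>i. integrable P (\<lambda>\<omega>. (F i (\<xi> i \<omega>, \<xi> (Suc i) \<omega>))\<^sup>2)"
    and F_mean: "\<And>i. expectation (\<lambda>\<omega>. F i (\<xi> i \<omega>, \<xi> (Suc i) \<omega>)) = 0"
    and F_sq_le: "\<And>i. expectation (\<lambda>\<omega>. (F i (\<xi> i \<omega>, \<xi> (Suc i) \<omega>))\<^sup>2) \<le> \<sigma>2"
begin

definition "Z i \<omega> = F i (\<xi> i \<omega>, \<xi> (Suc i) \<omega>)"

lemma Z_measurable[measurable]: "Z i \<in> borel_measurable P"
  unfolding Z_def by measurable

lemma Z_moments:
  shows "integrable P (Z i)" and "expectation (Z i) = 0"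
    and "integrable P (\<lambda>\<omega>. (Z i \<omega>)\<^sup>2)" and "expectation (\<lambda>\<omega>. (Z i \<omega>)\<^sup>2) \<le> \<sigma>2"
  using square_integrable_imp_integrable[OF Z_measurable] F_sq_integrable F_mean F_sq_le
  unfolding Z_def by auto

lemma \<sigma>2_nonneg: "0 \<le> \<sigma>2"
proof -
  have "0 \<le> expectation (\<lambda>\<omega>. (Z 0 \<omega>)\<^sup>2)" by (rule integral_nonneg_AE) simp
  then show ?thesis using Z_moments(4)[of 0] by linarith
qed

lemma F_component_measurable:
  "{i, Suc i} \<subseteq> A \<Longrightarrow> (\<lambda>x. F i (x i, x (Suc i))) \<in> borel_measurable (PiM A (\<lambda>_. borel))"
  by (auto intro!: measurable_component_singleton)

lemma indep_Z:
  assumes "2 \<le> \<bar>int i - int k\<bar>"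
  shows "indep_var borel (Z i) borel (Z k)"
proof -
  have "{i, Suc i} \<inter> {k, Suc k} = {}" using assms by auto
  from indep_var_restrict[OF this F_component_measurable F_component_measurable]
  show ?thesis by (simp add: Z_def[abs_def])
qed

lemma indep_Z_prod3:
  assumes "2 \<le> \<bar>int k - int i\<bar>" "2 \<le> \<bar>int k - int j\<bar>" "2 \<le> \<bar>int k - int l\<bar>"
  shows "indep_var borel (Z k) borel (\<lambda>\<omega>. Z i \<omega> * Z j \<omega> * Z l \<omega>)"
proof -
  define B where "B = {i, Suc i, j, Suc j, l, Suc l}"
  have "{k, Suc k} \<inter> B = {}" using assms unfolding B_def by auto
  moreover have "(\<lambda>x. F i (x i, x (Suc i)) * F j (x j, x (Suc j)) * F l (x l, x (Suc l)))
      \<in> borel_measurable (PiM B (\<lambda>_. borel))"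
    using F_component_measurable[of i B] F_component_measurable[of j B] F_component_measurable[of l B]
    unfolding B_def by measurable
  ultimately have "indep_var borel (\<lambda>\<omega>. (\<lambda>x. F k (x k, x (Suc k))) (restrict (\<lambda>q. \<xi> q \<omega>) {k, Suc k}))
      borel (\<lambda>\<omega>. (\<lambda>x. F i (x i, x (Suc i)) * F j (x j, x (Suc j)) * F l (x l, x (Suc l)))
        (restrict (\<lambda>q. \<xi> q \<omega>) B))"
    by (intro indep_var_restrict F_component_measurable) auto
  then show ?thesis by (simp add: Z_def[abs_def] B_def)
qed

lemma Z_mult:
  shows "integrable P (\<lambda>\<omega>. Z i \<omega> * Z k \<omega>)" and "\<bar>expectation (\<lambda>\<omega>. Z i \<omega> * Z k \<omega>)\<bar> \<le> \<sigma>2"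
  using integrable_mult_of_squares[OF Z_measurable Z_measurable Z_moments(3) Z_moments(3), of i k]
    Z_moments(4)[of i] Z_moments(4)[of k] by auto

lemma Z_mult_eq_0: "2 \<le> \<bar>int i - int k\<bar> \<Longrightarrow> expectation (\<lambda>\<omega>. Z i \<omega> * Z k \<omega>) = 0"
  using indep_var_lebesgue_integral[OF indep_Z] Z_moments(1,2) by simp

lemma Z_mult_sq:
  assumes "2 \<le> \<bar>int i - int j\<bar>"
  shows "integrable P (\<lambda>\<omega>. (Z i \<omega> * Z j \<omega>)\<^sup>2)" and "expectation (\<lambda>\<omega>. (Z i \<omega> * Z j \<omega>)\<^sup>2) \<le> \<sigma>2\<^sup>2"
proof -
  have indep: "indep_var borel (\<lambda>\<omega>. (Z i \<omega>)\<^sup>2) borel (\<lambda>\<omega>. (Z j \<omega>)\<^sup>2)"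
  proof -
    have "(\<lambda>x::real. x\<^sup>2) \<in> borel_measurable borel" by measurable
    from indep_var_compose[OF indep_Z[OF assms] this this] show ?thesis by (simp add: comp_def)
  qed
  show "integrable P (\<lambda>\<omega>. (Z i \<omega> * Z j \<omega>)\<^sup>2)"
    using indep_var_integrable[OF indep Z_moments(3) Z_moments(3)] by (simp add: power_mult_distrib)
  have "expectation (\<lambda>\<omega>. (Z i \<omega> * Z j \<omega>)\<^sup>2)
      = expectation (\<lambda>\<omega>. (Z i \<omega>)\<^sup>2) * expectation (\<lambda>\<omega>. (Z j \<omega>)\<^sup>2)"
    using indep_var_lebesgue_integral[OF indep Z_moments(3) Z_moments(3)] by (simp add: power_mult_distrib)
  also have "\<dots> \<le> \<sigma>2 * \<sigma>2"
    using Z_moments(4) \<sigma>2_nonneg by (intro mult_mono) (auto intro: integral_nonneg_AE)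
  finally show "expectation (\<lambda>\<omega>. (Z i \<omega> * Z j \<omega>)\<^sup>2) \<le> \<sigma>2\<^sup>2" by (simp add: power2_eq_square)
qed

lemma Z_mult4:
  assumes "2 \<le> \<bar>int i - int j\<bar>" "2 \<le> \<bar>int k - int l\<bar>"
  shows "integrable P (\<lambda>\<omega>. Z i \<omega> * Z j \<omega> * (Z k \<omega> * Z l \<omega>))"
    and "\<bar>expectation (\<lambda>\<omega>. Z i \<omega> * Z j \<omega> * (Z k \<omega> * Z l \<omega>))\<bar> \<le> \<sigma>2\<^sup>2"
  using integrable_mult_of_squares[of "\<lambda>\<omega>. Z i \<omega> * Z j \<omega>" "\<lambda>\<omega>. Z k \<omega> * Z l \<omega>"]
    Z_mult_sq[OF assms(1)] Z_mult_sq[OF assms(2)] by auto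

lemma Z_mult4_eq_0:
  assumes "2 \<le> \<bar>int i - int j\<bar>"
    and "2 \<le> \<bar>int k - int i\<bar>" "2 \<le> \<bar>int k - int j\<bar>" "2 \<le> \<bar>int k - int l\<bar>"
  shows "expectation (\<lambda>\<omega>. Z i \<omega> * Z j \<omega> * (Z k \<omega> * Z l \<omega>)) = 0"
proof -
  have "integrable P (\<lambda>\<omega>. Z i \<omega> * Z j \<omega> * Z l \<omega>)"
    using integrable_mult_of_squares(1)[of "\<lambda>\<omega>. Z i \<omega> * Z j \<omega>" "Z l"] Z_mult_sq[OF assms(1)] Z_moments(3)
    by auto
  then have "expectation (\<lambda>\<omega>. Z k \<omega> * (Z i \<omega> * Z j \<omega> * Z l \<omega>)) = 0"
    using indep_var_lebesgue_integral[OF indep_Z_prod3[OF assms(2-4)]] Z_moments(1,2) by simp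
  then show ?thesis by (simp add: ac_simps)
qed

lemma linear_form_moment:
  fixes c :: "nat \<Rightarrow> real"
  shows "integrable P (\<lambda>\<omega>. (\<Sum>i<n. c i * Z i \<omega>)\<^sup>2)"
    and "expectation (\<lambda>\<omega>. (\<Sum>i<n. c i * Z i \<omega>)\<^sup>2) \<le> 3 * \<sigma>2 * (\<Sum>i<n. (c i)\<^sup>2)"
proof -
  define T where "T i k \<omega> = c i * c k * (Z i \<omega> * Z k \<omega>)" for i k \<omega>
  have sq: "(\<lambda>\<omega>. (\<Sum>i<n. c i * Z i \<omega>)\<^sup>2) = (\<lambda>\<omega>. \<Sum>i<n. \<Sum>k<n. T i k \<omega>)"
    unfolding T_def power2_eq_square sum_distrib_left sum_distrib_right by (simp add: mult_ac)
  have T_int: "integrable P (T i k)" for i k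
    unfolding T_def using Z_mult(1) by simp
  show "integrable P (\<lambda>\<omega>. (\<Sum>i<n. c i * Z i \<omega>)\<^sup>2)"
    unfolding sq by (rule expectation_double_sum(1)) (rule T_int)
  have "expectation (T i k) \<le> \<sigma>2 * (if \<bar>int k - int i\<bar> < 2 then ((c i)\<^sup>2 + (c k)\<^sup>2) / 2 else 0)" for i k
  proof (cases "\<bar>int k - int i\<bar> < 2")
    case True
    have "expectation (T i k) = c i * c k * expectation (\<lambda>\<omega>. Z i \<omega> * Z k \<omega>)"
      unfolding T_def by simp
    also have "\<dots> \<le> \<bar>c i * c k\<bar> * \<bar>expectation (\<lambda>\<omega>. Z i \<omega> * Z k \<omega>)\<bar>"
      by (metis abs_ge_self abs_mult)
    also have "\<dots> \<le> ((c i)\<^sup>2 + (c k)\<^sup>2) / 2 * \<sigma>2"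
    proof (rule mult_mono)
      have "0 \<le> (\<bar>c i\<bar> - \<bar>c k\<bar>)\<^sup>2" by simp
      then show "\<bar>c i * c k\<bar> \<le> ((c i)\<^sup>2 + (c k)\<^sup>2) / 2" by (simp add: power2_eq_square algebra_simps abs_mult)
    qed (use Z_mult(2) in auto)
    finally show ?thesis using True by (simp add: mult_ac)
  next
    case False
    then show ?thesis unfolding T_def using Z_mult_eq_0[of i k] by simp
  qed
  then have "expectation (\<lambda>\<omega>. \<Sum>i<n. \<Sum>k<n. T i k \<omega>)
      \<le> \<sigma>2 * (\<Sum>i<n. \<Sum>k<n. if \<bar>int k - int i\<bar> < 2 then ((c i)\<^sup>2 + (c k)\<^sup>2) / 2 else 0)"
    unfolding expectation_double_sum(2)[OF T_int] sum_distrib_left by (intro sum_mono)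
  also have "\<dots> \<le> \<sigma>2 * (3 * (\<Sum>i<n. (c i)\<^sup>2))"
    by (rule mult_left_mono[OF sum_near_diag_le \<sigma>2_nonneg])
  finally show "expectation (\<lambda>\<omega>. (\<Sum>i<n. c i * Z i \<omega>)\<^sup>2) \<le> 3 * \<sigma>2 * (\<Sum>i<n. (c i)\<^sup>2)"
    unfolding sq by (simp add: mult_ac)
qed

text \<open>Only pairs (k, l) with both indices within distance 1 of {i, j} contribute: otherwise one
  factor is independent of the other three.\<close>
lemma fourth_moment_row_le:
  fixes G :: "nat \<Rightarrow> nat \<Rightarrow> real"
  assumes G_near: "\<And>i j. \<bar>int i - int j\<bar> < 2 \<Longrightarrow> G i j = 0" and G_le: "\<And>i j. \<bar>G i j\<bar> \<le> g"
    and far: "2 \<le> \<bar>int i - int j\<bar>"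
  shows "(\<Sum>p\<in>{..<n} \<times> {..<n}.
      \<bar>G (fst p) (snd p) * expectation (\<lambda>\<omega>. Z i \<omega> * Z j \<omega> * (Z (fst p) \<omega> * Z (snd p) \<omega>))\<bar>)
    \<le> 36 * \<sigma>2\<^sup>2 * g"
proof -
  let ?t = "\<lambda>k l. \<bar>G k l * expectation (\<lambda>\<omega>. Z i \<omega> * Z j \<omega> * (Z k \<omega> * Z l \<omega>))\<bar>"
  define Nb where "Nb = {k. k < n \<and> (\<bar>int i - int k\<bar> < 2 \<or> \<bar>int j - int k\<bar> < 2)}"
  have "card Nb \<le> card {k. k < n \<and> \<bar>int i - int k\<bar> < 2} + card {k. k < n \<and> \<bar>int j - int k\<bar> < 2}"
    unfolding Nb_def by (rule order_trans[OF card_mono card_Un_le]) auto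
  then have "card Nb \<le> 6" using card_near_index_le[of n i] card_near_index_le[of n j] by linarith
  then have "card (Nb \<times> Nb) \<le> 36"
    using mult_le_mono[of "card Nb" 6 "card Nb" 6] by (simp add: card_cartesian_product)
  then have card_Nb2: "real (card (Nb \<times> Nb)) \<le> 36" by simp
  have vanish: "?t k l = 0" if "k < n" "l < n" "(k, l) \<notin> Nb \<times> Nb" for k l
  proof (cases "G k l = 0")
    case False
    then have kl: "2 \<le> \<bar>int k - int l\<bar>" using G_near by force
    show ?thesis
    proof (cases "k \<in> Nb")
      case True
      then have "l \<notin> Nb" using that(3) by auto
      then have "2 \<le> \<bar>int l - int i\<bar>" "2 \<le> \<bar>int l - int j\<bar>" using that(2) unfolding Nb_def by auto
      with far kl have "expectation (\<lambda>\<omega>. Z i \<omega> * Z j \<omega> * (Z l \<omega> * Z k \<omega>)) = 0"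
        by (intro Z_mult4_eq_0) auto
      then show ?thesis by (simp add: mult.commute)
    next
      case False
      then have "2 \<le> \<bar>int k - int i\<bar>" "2 \<le> \<bar>int k - int j\<bar>" using that(1) unfolding Nb_def by auto
      with far kl show ?thesis using Z_mult4_eq_0 by simp
    qed
  qed simp
  have "0 \<le> g" using G_le[of 0 0] by linarith
  have bound: "?t k l \<le> g * \<sigma>2\<^sup>2" for k l
  proof (cases "G k l = 0")
    case False
    then have "2 \<le> \<bar>int k - int l\<bar>" using G_near by force
    then show ?thesis
      unfolding abs_mult using G_le[of k l] \<open>0 \<le> g\<close> Z_mult4(2)[OF far] by (intro mult_mono) auto
  qed (use G_le[of k l] in simp)
  have "(\<Sum>p\<in>{..<n} \<times> {..<n}. ?t (fst p) (snd p)) = (\<Sum>p\<in>({..<n} \<times> {..<n}) \<inter> (Nb \<times> Nb). ?t (fst p) (snd p))"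
    using vanish by (intro sum.mono_neutral_right) (auto simp: mem_Times_iff)
  also have "\<dots> \<le> (\<Sum>p\<in>Nb \<times> Nb. ?t (fst p) (snd p))"
    by (rule sum_mono2) (auto simp: Nb_def)
  also have "\<dots> \<le> real (card (Nb \<times> Nb)) * (g * \<sigma>2\<^sup>2)"
    using sum_mono[of "Nb \<times> Nb" "\<lambda>p. ?t (fst p) (snd p)" "\<lambda>_. g * \<sigma>2\<^sup>2"] bound by simp
  also have "\<dots> \<le> 36 * (g * \<sigma>2\<^sup>2)"
    by (rule mult_right_mono[OF card_Nb2]) (use G_le[of 0 0] in simp)
  finally show ?thesis by (simp add: mult_ac)
qed

lemma quadratic_form_moment:
  fixes G :: "nat \<Rightarrow> nat \<Rightarrow> real"
  assumes G_near: "\<And>i j. \<bar>int i - int j\<bar> < 2 \<Longrightarrow> G i j = 0" and G_le: "\<And>i j. \<bar>G i j\<bar> \<le> g"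
  shows "integrable P (\<lambda>\<omega>. (\<Sum>i<n. \<Sum>j<n. G i j * (Z i \<omega> * Z j \<omega>))\<^sup>2)"
    and "expectation (\<lambda>\<omega>. (\<Sum>i<n. \<Sum>j<n. G i j * (Z i \<omega> * Z j \<omega>))\<^sup>2)
      \<le> 36 * \<sigma>2\<^sup>2 * g * (\<Sum>i<n. \<Sum>j<n. \<bar>G i j\<bar>)"
proof -
  define S where "S = {..<n} \<times> {..<n}"
  define T where "T p p' \<omega> = G (fst p) (snd p) * G (fst p') (snd p')
      * (Z (fst p) \<omega> * Z (snd p) \<omega> * (Z (fst p') \<omega> * Z (snd p') \<omega>))" for p p' \<omega>
  have pairs: "(\<Sum>i<n. \<Sum>j<n. f i j) = (\<Sum>p\<in>S. f (fst p) (snd p))" for f :: "nat \<Rightarrow> nat \<Rightarrow> real"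
    unfolding S_def by (simp add: sum.cartesian_product case_prod_beta)
  have sq: "(\<lambda>\<omega>. (\<Sum>i<n. \<Sum>j<n. G i j * (Z i \<omega> * Z j \<omega>))\<^sup>2) = (\<lambda>\<omega>. \<Sum>p\<in>S. \<Sum>p'\<in>S. T p p' \<omega>)"
    unfolding pairs T_def power2_eq_square sum_product by (simp add: ac_simps)
  have T_int: "integrable P (T p p')" for p p'
  proof (cases "G (fst p) (snd p) = 0 \<or> G (fst p') (snd p') = 0")
    case False
    then have "2 \<le> \<bar>int (fst p) - int (snd p)\<bar>" "2 \<le> \<bar>int (fst p') - int (snd p')\<bar>"
      using G_near by force+
    then show ?thesis unfolding T_def[abs_def] using Z_mult4(1) by simp
  qed (auto simp: T_def[abs_def])
  show "integrable P (\<lambda>\<omega>. (\<Sum>i<n. \<Sum>j<n. G i j * (Z i \<omega> * Z j \<omega>))\<^sup>2)"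
    unfolding sq by (rule expectation_double_sum(1)) (rule T_int)
  have row: "(\<Sum>p'\<in>S. \<bar>expectation (T p p')\<bar>) \<le> 36 * \<sigma>2\<^sup>2 * g * \<bar>G (fst p) (snd p)\<bar>" for p
  proof (cases "G (fst p) (snd p) = 0")
    case False
    then have "2 \<le> \<bar>int (fst p) - int (snd p)\<bar>" using G_near by force
    from fourth_moment_row_le[OF G_near G_le this]
    have "\<bar>G (fst p) (snd p)\<bar> * (\<Sum>p'\<in>S. \<bar>G (fst p') (snd p')
        * expectation (\<lambda>\<omega>. Z (fst p) \<omega> * Z (snd p) \<omega> * (Z (fst p') \<omega> * Z (snd p') \<omega>))\<bar>)
      \<le> \<bar>G (fst p) (snd p)\<bar> * (36 * \<sigma>2\<^sup>2 * g)"
      unfolding S_def by (intro mult_left_mono) auto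
    then show ?thesis unfolding T_def by (simp add: abs_mult sum_distrib_left mult_ac)
  qed (simp add: T_def[abs_def])
  have "expectation (\<lambda>\<omega>. \<Sum>p\<in>S. \<Sum>p'\<in>S. T p p' \<omega>) \<le> (\<Sum>p\<in>S. \<Sum>p'\<in>S. \<bar>expectation (T p p')\<bar>)"
    unfolding expectation_double_sum(2)[OF T_int] by (intro sum_mono) simp
  also have "\<dots> \<le> (\<Sum>p\<in>S. 36 * \<sigma>2\<^sup>2 * g * \<bar>G (fst p) (snd p)\<bar>)"
    by (intro sum_mono row)
  also have "\<dots> = 36 * \<sigma>2\<^sup>2 * g * (\<Sum>i<n. \<Sum>j<n. \<bar>G i j\<bar>)"
    by (simp add: pairs sum_distrib_left)
  finally show "expectation (\<lambda>\<omega>. (\<Sum>i<n. \<Sum>j<n. G i j * (Z i \<omega> * Z j \<omega>))\<^sup>2)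
      \<le> 36 * \<sigma>2\<^sup>2 * g * (\<Sum>i<n. \<Sum>j<n. \<bar>G i j\<bar>)"
    unfolding sq .
qed

end

section \<open>The mean squared error\<close>

lemma (in prob_space) nn_integral_sq_sum3_le:
  assumes "\<And>\<omega>. X \<omega> = a + Y \<omega> + Z \<omega>"
    and "integrable M (\<lambda>\<omega>. (Y \<omega>)\<^sup>2)" "integrable M (\<lambda>\<omega>. (Z \<omega>)\<^sup>2)"
  shows "(\<integral>\<^sup>+ \<omega>. ennreal ((X \<omega>)\<^sup>2) \<partial>M)
    \<le> ennreal (3 * (a\<^sup>2 + expectation (\<lambda>\<omega>. (Y \<omega>)\<^sup>2) + expectation (\<lambda>\<omega>. (Z \<omega>)\<^sup>2)))"
proof -
  have "(\<integral>\<^sup>+ \<omega>. ennreal ((X \<omega>)\<^sup>2) \<partial>M) \<le> (\<integral>\<^sup>+ \<omega>. ennreal (3 * (a\<^sup>2 + (Y \<omega>)\<^sup>2 + (Z \<omega>)\<^sup>2)) \<partial>M)"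
    using sq_sum3_le assms(1) by (intro nn_integral_mono ennreal_leI) simp
  also have "\<dots> = ennreal (expectation (\<lambda>\<omega>. 3 * (a\<^sup>2 + (Y \<omega>)\<^sup>2 + (Z \<omega>)\<^sup>2)))"
    using assms(2,3) by (intro nn_integral_eq_integral) auto
  also have "expectation (\<lambda>\<omega>. 3 * (a\<^sup>2 + (Y \<omega>)\<^sup>2 + (Z \<omega>)\<^sup>2))
      = 3 * (a\<^sup>2 + expectation (\<lambda>\<omega>. (Y \<omega>)\<^sup>2) + expectation (\<lambda>\<omega>. (Z \<omega>)\<^sup>2))"
    using assms(2,3) prob_space by simp
  finally show ?thesis .
qed

context iid_noise
begin

definition "sq_incr_var_bound M = 54 * (M ^ 4 + 2 * M\<^sup>2 * mu4) + 2 * (2 * M + M\<^sup>2)\<^sup>2"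

lemma one_dependent_sq_increments:
  fixes \<delta> s :: "nat \<Rightarrow> real" and n :: nat and M :: real
  defines "F \<equiv> \<lambda>i p. if i < n then (\<delta> i + s (Suc i) * snd p - s i * fst p)\<^sup>2
      - ((\<delta> i)\<^sup>2 + (s (Suc i))\<^sup>2 + (s i)\<^sup>2) else 0"
  assumes "0 \<le> M" "\<And>i. i < n \<Longrightarrow> \<bar>\<delta> i\<bar> \<le> M" "\<And>q. q \<le> n \<Longrightarrow> (s q)\<^sup>2 \<le> M"
  shows "one_dependent P \<xi> F (sq_incr_var_bound M)"
proof unfold_locales
  fix i
  note moments = increment_moments[where \<delta>="\<delta> i" and a="s (Suc i)" and b="s i" and i=i]
  show "F i \<in> borel_measurable borel" unfolding F_def borel_prod[symmetric] by measurable
  show "integrable P (\<lambda>\<omega>. (F i (\<xi> i \<omega>, \<xi> (Suc i) \<omega>))\<^sup>2)"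
    unfolding F_def using moments(3) by (cases "i < n") simp_all
  show "expectation (\<lambda>\<omega>. F i (\<xi> i \<omega>, \<xi> (Suc i) \<omega>)) = 0"
    unfolding F_def using moments(1,2) prob_space by (cases "i < n") simp_all
  show "expectation (\<lambda>\<omega>. (F i (\<xi> i \<omega>, \<xi> (Suc i) \<omega>))\<^sup>2) \<le> sq_incr_var_bound M"
  proof (cases "i < n")
    case True
    let ?v = "(\<delta> i)\<^sup>2 + (s (Suc i))\<^sup>2 + (s i)\<^sup>2"
    have "\<delta> i ^ 4 \<le> M ^ 4"
      using assms(3)[OF True] power_mono[of "\<bar>\<delta> i\<bar>" M 4] by (simp add: power_even_abs)
    have s4: "s q ^ 4 \<le> M\<^sup>2" if "q \<le> n" for q
      using power_mono[OF assms(4)[OF that], of 2] by (simp flip: power_mult)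
    have "(s (Suc i) ^ 4 + s i ^ 4) * mu4 \<le> 2 * M\<^sup>2 * mu4"
      using s4[of i] s4[of "Suc i"] True mu4_nonneg by (intro mult_right_mono) auto
    moreover have "0 \<le> ?v" "?v \<le> 2 * M + M\<^sup>2"
      using assms(4)[of i] assms(4)[of "Suc i"] True power_mono[OF assms(3)[OF True], of 2] by auto
    then have "?v\<^sup>2 \<le> (2 * M + M\<^sup>2)\<^sup>2" by (intro power_mono)
    ultimately have "54 * (\<delta> i ^ 4 + (s (Suc i) ^ 4 + s i ^ 4) * mu4) + 2 * ?v\<^sup>2 \<le> sq_incr_var_bound M"
      unfolding sq_incr_var_bound_def using \<open>\<delta> i ^ 4 \<le> M ^ 4\<close> by (intro add_mono mult_left_mono) auto
    then show ?thesis unfolding F_def using True moments(4) by simp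
  qed (simp add: F_def sq_incr_var_bound_def mu4_nonneg assms(2))
qed

end

definition mse_const :: "real \<Rightarrow> real \<Rightarrow> real \<Rightarrow> real" where
  "mse_const M \<kappa> \<sigma>2 = 3 * (bias_const M \<kappa> + 3 * \<sigma>2 * lin_const M \<kappa> + 36 * \<sigma>2\<^sup>2 * (\<kappa> + 1) * (3 * \<kappa> + 1))"

locale noisy_kernel_design = kernel_design + one_dependent
begin

lemma linear_part_moment:
  "expectation (\<lambda>\<omega>. (\<Sum>i<n. lin_coef i * Z i \<omega>)\<^sup>2) \<le> 3 * \<sigma>2 * lin_const M \<kappa> * rate"
  using linear_form_moment(2)[where c = lin_coef and n = n] mult_left_mono[OF sum_sq_lin_coef_le, of "3 * \<sigma>2"] \<sigma>2_nonneg
  by (simp add: mult_ac)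

lemma quadratic_part_moment:
  "expectation (\<lambda>\<omega>. (\<Sum>i<n. \<Sum>j<n. quad_coef i j * (Z i \<omega> * Z j \<omega>))\<^sup>2)
    \<le> 36 * \<sigma>2\<^sup>2 * (\<kappa> + 1) * (3 * \<kappa> + 1) * rate"
proof -
  have "expectation (\<lambda>\<omega>. (\<Sum>i<n. \<Sum>j<n. quad_coef i j * (Z i \<omega> * Z j \<omega>))\<^sup>2)
      \<le> 36 * \<sigma>2\<^sup>2 * ((\<kappa> + 1) / ((real n)\<^sup>2 * h)) * (\<Sum>i<n. \<Sum>j<n. \<bar>quad_coef i j\<bar>)"
    by (rule quadratic_form_moment(2)[OF quad_coef_eq_0_near abs_quad_coef_le])
  also have "\<dots> \<le> 36 * \<sigma>2\<^sup>2 * ((\<kappa> + 1) * rate) * (3 * \<kappa> + 1)"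
  proof (intro mult_mono mult_left_mono)
    show "(\<kappa> + 1) / ((real n)\<^sup>2 * h) \<le> (\<kappa> + 1) * rate"
      using mult_left_mono[OF rate_ge(4), of "\<kappa> + 1"] \<kappa>_nonneg by simp
    have "0 \<le> 1 / ((real n)\<^sup>2 * h)" using h_pos by simp
    then have "0 \<le> rate" using rate_ge(4) by linarith
    then show "0 \<le> 36 * \<sigma>2\<^sup>2 * ((\<kappa> + 1) * rate)" using \<kappa>_nonneg by simp
  qed (use sum_abs_quad_coef_le \<kappa>_nonneg h_pos in \<open>auto simp: sum_nonneg\<close>)
  finally show ?thesis by (simp add: mult_ac)
qed

lemma mean_sq_error_le:
  assumes "\<And>\<omega>. X \<omega> = (bias_term - target) + (\<Sum>i<n. lin_coef i * Z i \<omega>)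
      + (\<Sum>i<n. \<Sum>j<n. quad_coef i j * (Z i \<omega> * Z j \<omega>))"
  shows "(\<integral>\<^sup>+ \<omega>. ennreal ((X \<omega>)\<^sup>2) \<partial>P) \<le> ennreal (mse_const M \<kappa> \<sigma>2 * rate)"
proof -
  have "(\<integral>\<^sup>+ \<omega>. ennreal ((X \<omega>)\<^sup>2) \<partial>P) \<le> ennreal (3 * ((bias_term - target)\<^sup>2
      + expectation (\<lambda>\<omega>. (\<Sum>i<n. lin_coef i * Z i \<omega>)\<^sup>2)
      + expectation (\<lambda>\<omega>. (\<Sum>i<n. \<Sum>j<n. quad_coef i j * (Z i \<omega> * Z j \<omega>))\<^sup>2)))"
    by (rule nn_integral_sq_sum3_le[OF assms linear_form_moment(1)
          quadratic_form_moment(1)[OF quad_coef_eq_0_near abs_quad_coef_le]])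
  also have "\<dots> \<le> ennreal (mse_const M \<kappa> \<sigma>2 * rate)"
    using bias_sq_le linear_part_moment quadratic_part_moment
    unfolding mse_const_def by (intro ennreal_leI) (simp add: algebra_simps)
  finally show ?thesis .
qed

end

context iid_noise
begin

lemma mse_bound:
  assumes K: "is_kernel K" "\<And>x. \<bar>K x\<bar> \<le> B" and c: "c > 0" "\<bar>kden K n h\<bar> \<ge> c"
    and n: "n \<ge> 1" and h: "0 < h" "h < 1" and \<alpha>: "\<alpha> > 0" and \<beta>: "0 < \<beta>" "\<beta> < 1" and "M > 0"
    and f: "f \<in> holder_class \<alpha> M" and V: "V \<in> holder_class \<beta> M" "\<forall>x\<in>{0..1}. 0 \<le> V x"
  shows "(\<integral>\<^sup>+ \<omega>. ennreal ((That K n h f V \<xi> \<omega> - Ttarget n f V)\<^sup>2) \<partial>P)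
    \<le> ennreal (mse_const M (B / c) (sq_incr_var_bound M) * (real n powr (- 8 * min \<alpha> 1) + h powr (4 * \<beta>)
      + h\<^sup>2 + 1 / ((real n)\<^sup>2 * h) + Wdev2 n V / (real n)\<^sup>2))"
proof -
  define W where "W i = (if i < n then Wv n V i else 0)" for i
  define d where "d i = (if i < n then (deltav n f i)\<^sup>2 else 0)" for i
  define s where "s q = sqrt (V (real q / real n))" for q
  define F where "F i p = (if i < n then (deltav n f i + s (Suc i) * snd p - s i * fst p)\<^sup>2
      - ((deltav n f i)\<^sup>2 + (s (Suc i))\<^sup>2 + (s i)\<^sup>2) else 0)" for i p
  have D: "kernel_design n h M \<beta> (min \<alpha> 1) (B / c) (nat \<lfloor>real n * h\<rfloor>) (Knh K n h) W d"
    unfolding W_def d_def by (rule kernel_design_instance[OF K c n h \<alpha> \<beta> f V])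
  have s_sq: "(s q)\<^sup>2 = V (real q / real n)" if "q \<le> n" for q
    unfolding s_def using nonneg_holder_grid_bounds(1)[OF V that n] by simp
  have "\<bar>deltav n f i\<bar> \<le> M" if "i < n" for i
    using kernel_design.d_le_M2[OF D, of i] that \<open>M > 0\<close> abs_le_square_iff[of "deltav n f i" M]
    unfolding d_def by simp
  moreover have "(s q)\<^sup>2 \<le> M" if "q \<le> n" for q
    using s_sq[OF that] nonneg_holder_grid_bounds(2)[OF V that n] by simp
  ultimately have "one_dependent P \<xi> F (sq_incr_var_bound M)"
    unfolding F_def[abs_def] using \<open>M > 0\<close> by (intro one_dependent_sq_increments) auto
  with D interpret N: noisy_kernel_design n h M \<beta> "min \<alpha> 1" "B / c" "nat \<lfloor>real n * h\<rfloor>" "Knh K n h" W d P \<xi> F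
      "sq_incr_var_bound M"
    by (simp add: noisy_kernel_design_def)
  have "diffR n f V \<xi> i \<omega> = deltav n f i + s (Suc i) * \<xi> (Suc i) \<omega> - s i * \<xi> i \<omega>" for i \<omega>
    unfolding diffR_def obsY_def deltav_def s_def by simp
  then have R_sq: "(diffR n f V \<xi> i \<omega>)\<^sup>2 = N.m i + N.Z i \<omega>" if "i < n" for i \<omega>
    using that s_sq[of i] s_sq[of "Suc i"] unfolding N.Z_def F_def N.m_def W_def d_def Wv_def by simp
  have Ttarget: "Ttarget n f V = N.target" and Wdev2: "Wdev2 n V = N.Wdev"
    by (rule N.Ttarget_Wdev2_eq; simp add: W_def d_def)+
  have "That K n h f V \<xi> \<omega> - Ttarget n f V = (N.bias_term - N.target) + (\<Sum>i<n. N.lin_coef i * N.Z i \<omega>)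
      + (\<Sum>i<n. \<Sum>j<n. N.quad_coef i j * (N.Z i \<omega> * N.Z j \<omega>))" for \<omega>
    using N.statistic_decomposition[OF refl R_sq] Ttarget by simp
  from N.mean_sq_error_le[OF this] show ?thesis unfolding N.rate_def Wdev2 .
qed

end

theorem proposition2p2:
  fixes \<alpha> \<beta> M c :: real and K :: "real \<Rightarrow> real"
    and P :: "'a measure" and \<xi> :: "nat \<Rightarrow> 'a \<Rightarrow> real"
  assumes "\<alpha> > 0" and "0 < \<beta>" and "\<beta> < 1/2" and "M > 0"
    and "is_kernel K" and "c > 0"
    and "prob_space P"
    and "\<And>i. \<xi> i \<in> borel_measurable P"
    and "prob_space.indep_vars P (\<lambda>_. borel) \<xi> UNIV"
    and "\<And>i. distr P borel (\<xi> i) = distr P borel (\<xi> 0)"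
    and "integrable P (\<xi> 0)" and "prob_space.expectation P (\<xi> 0) = 0"
    and "integrable P (\<lambda>\<omega>. (\<xi> 0 \<omega>)\<^sup>2)" and "prob_space.expectation P (\<lambda>\<omega>. (\<xi> 0 \<omega>)\<^sup>2) = 1"
    and "integrable P (\<lambda>\<omega>. (\<xi> 0 \<omega>) ^ 4)"
  shows "\<exists>C. \<forall>(n::nat) (h::real) f V.
     n \<ge> 1 \<longrightarrow> 0 < h \<longrightarrow> h < 1 \<longrightarrow>
     f \<in> holder_class \<alpha> M \<longrightarrow> V \<in> holder_class \<beta> M \<longrightarrow>
     (\<forall>x\<in>{0..1}. V x \<ge> 0) \<longrightarrow>
     \<bar>kden K n h\<bar> \<ge> c \<longrightarrow>
     (\<integral>\<^sup>+ \<omega>. ennreal ((That K n h f V \<xi> \<omega> - Ttarget n f V)\<^sup>2) \<partial>P)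
       \<le> ennreal (C * (real n powr (- 8 * min \<alpha> 1) + h powr (4 * \<beta>) + h\<^sup>2
                 + 1 / ((real n)\<^sup>2 * h) + Wdev2 n V / (real n)\<^sup>2))"
proof -
  obtain B where B: "\<And>x. \<bar>K x\<bar> \<le> B" using is_kernel_bounded[OF assms(5)] by metis
  interpret iid_noise P \<xi>
    unfolding iid_noise_def iid_noise_axioms_def indep_seq_def indep_seq_axioms_def
    by (intro conjI allI) (fact assms)+
  have "\<beta> < 1" using assms(3) by simp
  show ?thesis
    by (intro exI[of _ "mse_const M (B / c) (sq_incr_var_bound M)"] allI impI
        mse_bound[OF assms(5) B assms(6) _ _ _ _ assms(1,2) \<open>\<beta> < 1\<close> assms(4)])
qed

end
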